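(* Let $w,\kappa>0$, $\beta,c\in\mathbb{R}$ with $c\ne0$, and let $\mathcal{V}_1,\mathcal{V}_2$ be real analytic with $\mathcal{V}_1'(r)=r+r^2+\mathscr{V}_1(r)$, $\mathcal{V}_2'(r)=\kappa r+\beta r^2+\mathscr{V}_2(r)$, $\mathscr{V}_k(r)/r^2\to0$ as $r\to0$. For $U=(p_1,p_2,\xi_1,\xi_2,P_1,P_2)\in\mathcal{X}$ set \[ J(U;\mathcal{V}_1,\mathcal{V}_2,w,c):=c^2\left(\xi_1+\frac{\xi_2}{w}\right)-\int_{-1}^0\big[\mathcal{V}_1'(P_2(s+1)-P_1(s))+\mathcal{V}_2'(P_1(s+1)-P_2(s))\big]ds . \] Then: (i) $(U,c)\mapsto J(U;\mathcal{V}_1,\mathcal{V}_2,w,c)$ is analytic on $\mathcal{X}\times\mathbb{R}$, and $DJ(U;\mathcal{V}_1,\mathcal{V}_2,w,c)F(U;\mathcal{V}_1,\mathcal{V}_2,w,c)=0$ for all $U\in\mathcal{D}$; (ii) $DJ(0;\mathcal{V}_1,\mathcal{V}_2,w,c)U=c^2\xi_1+\frac{c^2}{w}\xi_2+\int_{-1}^0(P_1(s)+\kappa P_2(s))ds-\int_0^1(\kappa P_1(s)+P_2(s))ds$; (iii) if $\mathcal{V}_1=\mathcal{V}_2=\mathcal{V}$ then $J(\mathcal{S}_MU;\mathcal{V},\mathcal{V},w,c)=J(U;\mathcal{V},\mathcal{V},w,c)$, and if $w=1$ then $J(\mathcal{S}_KU;\mathcal{V}_1,\mathcal{V}_2,1,c)=J(U;\mathcal{V}_1,\mathcal{V}_2,1,c)$,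 for all $U\in\mathcal{X}$; (iv) with $\chi_0=(1,1,0,0,1,1)$ (the last two entries being constant functions), $J(U+\mu\chi_0;\mathcal{V}_1,\mathcal{V}_2,w,c)=J(U;\mathcal{V}_1,\mathcal{V}_2,w,c)$ for all $U\in\mathcal{X}$, $\mu\in\mathbb{R}$; (v) $\mathscr{J}_wU:=\xi_1+\xi_2/w$ is a bounded linear functional on $\mathcal{X}$ and $J(U;\mathcal{V}_1,\mathcal{V}_2,w,c)-J(U;\mathcal{V}_1,\mathcal{V}_2,w,\grave c)=(c^2-\grave c^2)\mathscr{J}_wU$ for all $U\in\mathcal{X}$, $\grave c\in\mathbb{R}$.
   Context: $\mathcal{X}=\{(p_1,p_2,\xi_1,\xi_2,P_1,P_2)\in\mathbb{R}^4\times C([-1,1])\times C([-1,1]):P_1(0)=p_1,P_2(0)=p_2\}$ with the maximum norm; $\mathcal{D}=\mathcal{X}\cap(\mathbb{R}^4\times C^1([-1,1])\times C^1([-1,1]))$. For $U\in\mathcal{D}$, \[ F(U;\mathcal{V}_1,\mathcal{V}_2,w,c)=\Big(\xi_1,\ \xi_2,\ c^{-2}\mathcal{V}_1'(P_2(1)-p_1)-c^{-2}\mathcal{V}_2'(p_1-P_2(-1)),\ c^{-2}w\mathcal{V}_2'(P_1(1)-p_2)-c^{-2}w\mathcal{V}_1'(p_2-P_1(-1)),\ P_1',\ P_2'\Big). \] With $(RP)(v)=P(-v)$: $\mathcal{S}_M(p_1,p_2,\xi_1,\xi_2,P_1,P_2)=(-p_1,-p_2,\xi_1,\xi_2,-RP_1,-RP_2)$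 and $\mathcal{S}_K(p_1,p_2,\xi_1,\xi_2,P_1,P_2)=(-p_2,-p_1,\xi_2,\xi_1,-RP_2,-RP_1)$. *)

theory Defs
  imports "HOL-Analysis.Analysis"
begin

text \<open>Elements of the ambient space R^4 x C([-1,1]) x C([-1,1]) are represented as
  tuples (p1,p2,xi1,xi2,P1,P2); the functions P1,P2 are only relevant on [-1,1]
  (values outside are ignored by the norm and by all constructions).\<close>

type_synonym st = "real \<times> real \<times> real \<times> real \<times> (real \<Rightarrow> real) \<times> (real \<Rightarrow> real)"

definition st_add :: "st \<Rightarrow> st \<Rightarrow> st" where
  "st_add U V = (case U of (p1,p2,x1,x2,P1,P2) \<Rightarrow> case V of (q1,q2,y1,y2,Q1,Q2) \<Rightarrow>
     (p1+q1, p2+q2, x1+y1, x2+y2, \<lambda>s. P1 s + Q1 s, \<lambda>s. P2 s + Q2 s))"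

definition st_scale :: "real \<Rightarrow> st \<Rightarrow> st" where
  "st_scale a U = (case U of (p1,p2,x1,x2,P1,P2) \<Rightarrow>
     (a*p1, a*p2, a*x1, a*x2, \<lambda>s. a * P1 s, \<lambda>s. a * P2 s))"

definition st_zero :: st where
  "st_zero = (0, 0, 0, 0, \<lambda>_. 0, \<lambda>_. 0)"

definition st_norm :: "st \<Rightarrow> real" where
  "st_norm U = (case U of (p1,p2,x1,x2,P1,P2) \<Rightarrow>
     Max {\<bar>p1\<bar>, \<bar>p2\<bar>, \<bar>x1\<bar>, \<bar>x2\<bar>,
          Sup ((\<lambda>s. \<bar>P1 s\<bar>) ` {-1..1}), Sup ((\<lambda>s. \<bar>P2 s\<bar>) ` {-1..1})})"

definition Asp :: "st set" where
  "Asp = {(p1,p2,x1,x2,P1,P2). continuous_on {-1..1} P1 \<and> continuous_on {-1..1} P2}"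

definition Xsp :: "st set" where
  "Xsp = {(p1,p2,x1,x2,P1,P2). continuous_on {-1..1} P1 \<and> continuous_on {-1..1} P2
            \<and> P1 0 = p1 \<and> P2 0 = p2}"

definition C1_deriv :: "(real \<Rightarrow> real) \<Rightarrow> (real \<Rightarrow> real) \<Rightarrow> bool" where
  "C1_deriv P Q \<longleftrightarrow> continuous_on {-1..1} Q \<and>
     (\<forall>x\<in>{-1..1}. (P has_real_derivative Q x) (at x within {-1..1}))"

definition Dsp :: "st set" where
  "Dsp = {(p1,p2,x1,x2,P1,P2). (p1,p2,x1,x2,P1,P2) \<in> Xsp \<and>
            (\<exists>Q1. C1_deriv P1 Q1) \<and> (\<exists>Q2. C1_deriv P2 Q2)}"

text \<open>The vector field F; dV1, dV2 stand for the derivatives V1', V2', and Q1, Q2 for P1', P2'.\<close>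
definition Fvf :: "(real \<Rightarrow> real) \<Rightarrow> (real \<Rightarrow> real) \<Rightarrow> real \<Rightarrow> real \<Rightarrow> st
                   \<Rightarrow> (real \<Rightarrow> real) \<Rightarrow> (real \<Rightarrow> real) \<Rightarrow> st" where
  "Fvf dV1 dV2 w c U Q1 Q2 = (case U of (p1,p2,x1,x2,P1,P2) \<Rightarrow>
     (x1, x2,
      dV1 (P2 1 - p1) / c^2 - dV2 (p1 - P2 (-1)) / c^2,
      w * dV2 (P1 1 - p2) / c^2 - w * dV1 (p2 - P1 (-1)) / c^2,
      Q1, Q2))"

definition Jfun :: "(real \<Rightarrow> real) \<Rightarrow> (real \<Rightarrow> real) \<Rightarrow> real \<Rightarrow> real \<Rightarrow> st \<Rightarrow> real" where
  "Jfun dV1 dV2 w c U = (case U of (p1,p2,x1,x2,P1,P2) \<Rightarrow>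
     c^2 * (x1 + x2 / w)
     - integral {-1..0} (\<lambda>s. dV1 (P2 (s+1) - P1 s) + dV2 (P1 (s+1) - P2 s)))"

definition Jw :: "real \<Rightarrow> st \<Rightarrow> real" where
  "Jw w U = (case U of (p1,p2,x1,x2,P1,P2) \<Rightarrow> x1 + x2 / w)"

definition SM :: "st \<Rightarrow> st" where
  "SM U = (case U of (p1,p2,x1,x2,P1,P2) \<Rightarrow> (-p1, -p2, x1, x2, \<lambda>v. - P1 (-v), \<lambda>v. - P2 (-v)))"

definition SK :: "st \<Rightarrow> st" where
  "SK U = (case U of (p1,p2,x1,x2,P1,P2) \<Rightarrow> (-p2, -p1, x2, x1, \<lambda>v. - P2 (-v), \<lambda>v. - P1 (-v)))"

definition chi0 :: st where
  "chi0 = (1, 1, 0, 0, \<lambda>_. 1, \<lambda>_. 1)"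

definition frechet_rel :: "st set \<Rightarrow> (st \<Rightarrow> real) \<Rightarrow> st \<Rightarrow> (st \<Rightarrow> real) \<Rightarrow> bool" where
  "frechet_rel A f x L \<longleftrightarrow>
     (\<forall>u\<in>A. \<forall>v\<in>A. \<forall>a b. L (st_add (st_scale a u) (st_scale b v)) = a * L u + b * L v) \<and>
     (\<exists>K. \<forall>h\<in>A. \<bar>L h\<bar> \<le> K * st_norm h) \<and>
     (\<forall>e>0. \<exists>d>0. \<forall>h\<in>A. st_norm h < d \<longrightarrow> \<bar>f (st_add x h) - f x - L h\<bar> \<le> e * st_norm h)"

definition bounded_linear_rel :: "st set \<Rightarrow> (st \<Rightarrow> real) \<Rightarrow> bool" where
  "bounded_linear_rel A L \<longleftrightarrow>
     (\<forall>u\<in>A. \<forall>v\<in>A. \<forall>a b. L (st_add (st_scale a u) (st_scale b v)) = a * L u + b * L v) \<and>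
     (\<exists>K. \<forall>h\<in>A. \<bar>L h\<bar> \<le> K * st_norm h)"

type_synonym ext = "st \<times> real"

definition ext_add :: "ext \<Rightarrow> ext \<Rightarrow> ext" where
  "ext_add x y = (st_add (fst x) (fst y), snd x + snd y)"

definition ext_scale :: "real \<Rightarrow> ext \<Rightarrow> ext" where
  "ext_scale a x = (st_scale a (fst x), a * snd x)"

definition ext_norm :: "ext \<Rightarrow> real" where
  "ext_norm x = max (st_norm (fst x)) \<bar>snd x\<bar>"

definition multilin_rel :: "ext set \<Rightarrow> nat \<Rightarrow> ((nat \<Rightarrow> ext) \<Rightarrow> real) \<Rightarrow> real \<Rightarrow> bool" where
  "multilin_rel Y n M C \<longleftrightarrow>
     (\<forall>v w. (\<forall>i<n. v i = w i) \<longrightarrow> M v = M w) \<and>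
     (\<forall>v i a b s t. (\<forall>j<n. v j \<in> Y) \<longrightarrow> i < n \<longrightarrow> a \<in> Y \<longrightarrow> b \<in> Y \<longrightarrow>
        M (v(i := ext_add (ext_scale s a) (ext_scale t b))) = s * M (v(i := a)) + t * M (v(i := b))) \<and>
     0 \<le> C \<and>
     (\<forall>v. (\<forall>i<n. v i \<in> Y) \<longrightarrow> \<bar>M v\<bar> \<le> C * (\<Prod>i<n. ext_norm (v i)))"

definition analytic_rel :: "ext set \<Rightarrow> (ext \<Rightarrow> real) \<Rightarrow> ext set \<Rightarrow> bool" where
  "analytic_rel Y f S \<longleftrightarrow> (\<forall>x\<in>S. \<exists>r>0. \<exists>M C.
     (\<forall>n. multilin_rel Y n (M n) (C n)) \<and> summable (\<lambda>n. C n * r ^ n) \<and>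
     (\<forall>h\<in>Y. ext_norm h < r \<longrightarrow> (\<lambda>n. M n (\<lambda>_. h)) sums f (ext_add x h)))"

definition real_analytic :: "(real \<Rightarrow> real) \<Rightarrow> bool" where
  "real_analytic f \<longleftrightarrow> (\<forall>x. \<exists>r>0. \<exists>a. \<forall>y. \<bar>y - x\<bar> < r \<longrightarrow> (\<lambda>n. a n * (y - x) ^ n) sums f y)"

end

theory Submission
  imports Defs
begin

text \<open>Write J(U) = c^2 Jw(U) - integral over s in [-1,0] of V1'(stretch1 U s) + V2'(stretch2 U s),
  where stretch1 U s = P2(s+1) - P1(s) and stretch2 U s = P1(s+1) - P2(s) are bounded linear in U.
  Expanding V_k' in its Taylor series about stretch_k U s, with Cauchy estimates that are uniform on
  the compact range of stretch_k U, writes J(U + H) as a normally convergent series of bounded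
  n-linear forms in H, and c^2 only adds a cubic polynomial; this is analyticity, and the linear term
  of the series is the Frechet derivative DJ(U). By the chain rule DJ(U) F(U) is the integral of the
  s-derivative of V1'(stretch1 U s) + V2'(stretch2 U s), so by the fundamental theorem of calculus it
  reduces to boundary terms, which c^2 Jw(F U) cancels exactly. At U = 0 the derivative only involves
  V1''(0) = 1 and V2''(0) = kappa; the symmetries come from the substitution s to -1 - s, and
  (iv), (v) can be read off from the formula for J.\<close>

section \<open>Real analytic functions of one variable\<close>

lemma real_analytic_powser_at:
  assumes "real_analytic f"
  obtains r a where "r > 0" "\<And>z. \<bar>z\<bar> < r \<Longrightarrow> summable (\<lambda>n. a n * z^n)"
    "\<And>y. \<bar>y - x\<bar> < r \<Longrightarrow> f y = (\<Sum>n. a n * (y - x)^n)"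
proof -
  obtain r a where "r > 0" and s: "\<And>y. \<bar>y - x\<bar> < r \<Longrightarrow> (\<lambda>n. a n * (y - x) ^ n) sums f y"
    using assms unfolding real_analytic_def by blast
  moreover have "summable (\<lambda>n. a n * z^n)" if "\<bar>z\<bar> < r" for z
    using s[of "x + z"] that by (auto simp: sums_iff)
  ultimately show thesis using that s by (metis sums_unique)
qed

lemma has_real_derivative_powser_at:
  fixes a :: "nat \<Rightarrow> real"
  assumes "\<And>z. \<bar>z\<bar> < r \<Longrightarrow> summable (\<lambda>n. a n * z^n)" "\<bar>y - x\<bar> < r"
  shows "((\<lambda>y. \<Sum>n. a n * (y - x)^n) has_real_derivative (\<Sum>n. diffs a n * (y - x)^n)) (at y)"
proof -
  have "((\<lambda>z. \<Sum>n. a n * z^n) has_real_derivative (\<Sum>n. diffs a n * (y - x)^n)) (at (y - x))"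
    using termdiffs_strong'[of r a "y - x"] assms by auto
  moreover have "((\<lambda>y. y - x) has_real_derivative 1) (at y)"
    by (auto intro!: derivative_eq_intros)
  ultimately show ?thesis using DERIV_chain2 by fastforce
qed

lemma summable_iterated_diffs:
  fixes a :: "nat \<Rightarrow> real"
  assumes "\<And>z. \<bar>z\<bar> < r \<Longrightarrow> summable (\<lambda>n. a n * z^n)" "\<bar>z\<bar> < r"
  shows "summable (\<lambda>n. (diffs ^^ k) a n * z^n)"
  using assms(2)
proof (induction k arbitrary: z)
  case 0
  then show ?case using assms(1) by simp
next
  case (Suc k)
  then show ?case using termdiff_converges[of z r "(diffs ^^ k) a"] by auto
qed

lemma real_analytic_iterated_deriv_powser:
  assumes "real_analytic f"
  obtains r a where "r > 0" "\<And>z. \<bar>z\<bar> < r \<Longrightarrow> summable (\<lambda>n. a n * z^n)"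
    "\<And>k y. \<bar>y - x\<bar> < r \<Longrightarrow> (deriv ^^ k) f y = (\<Sum>n. (diffs ^^ k) a n * (y - x)^n)"
    "\<And>k y. \<bar>y - x\<bar> < r \<Longrightarrow> ((deriv ^^ k) f has_real_derivative (deriv ^^ Suc k) f y) (at y)"
proof -
  obtain r a where r: "r > 0" and sm: "\<And>z. \<bar>z\<bar> < r \<Longrightarrow> summable (\<lambda>n. a n * z^n)"
    and f: "\<And>y. \<bar>y - x\<bar> < r \<Longrightarrow> f y = (\<Sum>n. a n * (y - x)^n)"
    using real_analytic_powser_at[OF assms] by blast
  define S where "S k y = (\<Sum>n. (diffs ^^ k) a n * (y - x)^n)" for k y
  have dS: "(S k has_real_derivative S (Suc k) y) (at y)" if "\<bar>y - x\<bar> < r" for k y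
    unfolding S_def using has_real_derivative_powser_at[OF summable_iterated_diffs[OF sm] that] by simp
  have local: "((deriv ^^ k) f has_real_derivative S (Suc k) y) (at y)"
    if "\<bar>y - x\<bar> < r" "\<And>y. \<bar>y - x\<bar> < r \<Longrightarrow> (deriv ^^ k) f y = S k y" for k y
    by (rule has_field_derivative_transform_within_open[OF dS[OF that(1)], of "ball x r"])
       (use that in \<open>auto simp: dist_real_def abs_minus_commute\<close>)
  have eq: "\<bar>y - x\<bar> < r \<Longrightarrow> (deriv ^^ k) f y = S k y" for k y
  proof (induction k arbitrary: y)
    case 0
    then show ?case using f by (simp add: S_def)
  next
    case (Suc k)
    then show ?case using local[of y k] Suc DERIV_imp_deriv by fastforce
  qed
  show thesis
  proof (rule that[OF r sm])
    show "(deriv ^^ k) f y = (\<Sum>n. (diffs ^^ k) a n * (y - x)^n)" if "\<bar>y - x\<bar> < r" for k y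
      using eq[OF that] by (simp add: S_def)
    show "((deriv ^^ k) f has_real_derivative (deriv ^^ Suc k) f y) (at y)" if "\<bar>y - x\<bar> < r" for k y
      using local[OF that eq] eq[OF that, of "Suc k"] by simp
  qed
qed

lemma real_analytic_has_iterated_deriv:
  "real_analytic f \<Longrightarrow> ((deriv ^^ k) f has_real_derivative (deriv ^^ Suc k) f y) (at y)"
  by (rule real_analytic_iterated_deriv_powser[of f y]) auto

lemma real_analytic_has_deriv:
  "real_analytic f \<Longrightarrow> (f has_real_derivative deriv f y) (at y)"
  using real_analytic_has_iterated_deriv[of f 0 y] by simp

lemma real_analytic_continuous_on_iterated_deriv:
  "real_analytic f \<Longrightarrow> continuous_on S ((deriv ^^ k) f)"
  by (meson DERIV_isCont continuous_at_imp_continuous_on real_analytic_has_iterated_deriv)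

lemma real_analytic_continuous_on:
  "real_analytic f \<Longrightarrow> continuous_on S f"
  using real_analytic_continuous_on_iterated_deriv[of f S 0] by simp

lemma real_analytic_continuous_on_deriv:
  "real_analytic f \<Longrightarrow> continuous_on S (deriv f)"
  using real_analytic_continuous_on_iterated_deriv[of f S 1] by simp

lemma real_analytic_derivative:
  assumes "real_analytic f" "\<And>y. (f has_real_derivative f' y) (at y)"
  shows "real_analytic f'"
  unfolding real_analytic_def
proof
  fix x
  obtain r a where "r > 0" and sm: "\<And>z. \<bar>z\<bar> < r \<Longrightarrow> summable (\<lambda>n. a n * z^n)"
    and eq: "\<And>k y. \<bar>y - x\<bar> < r \<Longrightarrow> (deriv ^^ k) f y = (\<Sum>n. (diffs ^^ k) a n * (y - x)^n)"
    by (rule real_analytic_iterated_deriv_powser[OF assms(1), of x]) blast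
  moreover have "(\<lambda>n. diffs a n * (y - x)^n) sums f' y" if "\<bar>y - x\<bar> < r" for y
    using eq[OF that, of 1] summable_iterated_diffs[OF sm that, of 1] DERIV_imp_deriv[OF assms(2)]
    by (simp add: sums_iff)
  ultimately show "\<exists>r>0. \<exists>a. \<forall>y. \<bar>y - x\<bar> < r \<longrightarrow> (\<lambda>n. a n * (y - x) ^ n) sums f' y"
    by blast
qed

lemma iterated_diffs_eq: "(diffs ^^ k) (a :: nat \<Rightarrow> real) n = fact (n + k) / fact n * a (n + k)"
proof (induction k arbitrary: n)
  case 0
  then show ?case by simp
next
  case (Suc k)
  have "(diffs ^^ Suc k) a n = of_nat (Suc n) * (diffs ^^ k) a (Suc n)"
    by (simp add: diffs_def)
  also have "\<dots> = of_nat (Suc n) * (fact (Suc n + k) / fact (Suc n) * a (Suc n + k))"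
    using Suc by simp
  also have "\<dots> = fact (n + Suc k) / fact n * a (n + Suc k)"
  proof -
    have "fact (Suc n) = of_nat (Suc n) * (fact n :: real)" by simp
    then show ?thesis by (simp del: fact_Suc of_nat_Suc)
  qed
  finally show ?case .
qed

lemma choose_mult_power_le_power_add:
  fixes d R :: real
  assumes "0 \<le> d" "0 \<le> R"
  shows "real ((n + N) choose n) * d^n * R^N \<le> (d + R)^(n + N)"
proof -
  have "real ((n + N) choose n) * d^n * R^(n + N - n)
      \<le> (\<Sum>k\<le>n+N. real ((n + N) choose k) * d^k * R^(n + N - k))"
    by (rule member_le_sum) (use assms in auto)
  also have "\<dots> = (d + R)^(n + N)" by (simp add: binomial_ring)
  finally show ?thesis by simp
qed

text \<open>The derived series at a point within R of x is dominated, via the binomial theorem, by the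
  absolutely convergent series of f at radius 2R.\<close>
lemma real_analytic_Cauchy_bound_at:
  assumes "real_analytic f"
  obtains R S where "R > 0" "S \<ge> 0"
    "\<And>\<xi> N. \<bar>\<xi> - x\<bar> \<le> R \<Longrightarrow> \<bar>(deriv ^^ N) f \<xi>\<bar> / fact N * R^N \<le> S"
proof -
  obtain r a where r: "r > 0" and sm: "\<And>z. \<bar>z\<bar> < r \<Longrightarrow> summable (\<lambda>n. a n * z^n)"
    and eq: "\<And>k y. \<bar>y - x\<bar> < r \<Longrightarrow> (deriv ^^ k) f y = (\<Sum>n. (diffs ^^ k) a n * (y - x)^n)"
    by (rule real_analytic_iterated_deriv_powser[OF assms, of x]) blast
  define R where "R = r / 3"
  have R: "R > 0" "2 * R < r" using r by (auto simp: R_def)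
  have absS: "summable (\<lambda>n. \<bar>a n\<bar> * (2 * R)^n)"
    using powser_insidea[OF sm[of "5 * r / 6"], of "2 * R"] R r
    by (simp add: R_def abs_mult power_abs)
  define S where "S = (\<Sum>n. \<bar>a n\<bar> * (2 * R)^n)"
  have S0: "S \<ge> 0" unfolding S_def using R by (intro suminf_nonneg absS) auto
  have "\<bar>(deriv ^^ N) f \<xi>\<bar> / fact N * R^N \<le> S" if \<xi>: "\<bar>\<xi> - x\<bar> \<le> R" for \<xi> N
  proof -
    define z where "z = \<xi> - x"
    have z: "\<bar>z\<bar> \<le> R" using \<xi> by (simp add: z_def)
    define t where "t n = \<bar>(diffs ^^ N) a n * z^n\<bar> / fact N * R^N" for n
    define g where "g n = \<bar>a (n + N)\<bar> * (2 * R)^(n + N)" for n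
    have sg: "summable g"
      unfolding g_def using absS summable_iff_shift[of "\<lambda>m. \<bar>a m\<bar> * (2 * R)^m" N] by simp
    have tg: "t n \<le> g n" for n
    proof -
      have "t n = \<bar>a (n + N)\<bar> * (real ((n + N) choose n) * \<bar>z\<bar>^n * R^N)"
        using binomial_fact[of n "n + N", where 'a = real]
        by (simp add: t_def iterated_diffs_eq abs_mult power_abs field_simps)
      also have "\<dots> \<le> \<bar>a (n + N)\<bar> * (\<bar>z\<bar> + R)^(n + N)"
        by (intro mult_left_mono choose_mult_power_le_power_add) (use R in auto)
      also have "\<dots> \<le> g n"
        unfolding g_def by (intro mult_left_mono power_mono) (use z in auto)
      finally show ?thesis .
    qed
    have st: "summable t"
      by (rule summable_comparison_test'[OF sg, of 0]) (use tg R in \<open>simp add: t_def abs_mult\<close>)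
    have "summable (\<lambda>n. (diffs ^^ N) a n * z^n)"
      by (rule summable_iterated_diffs[OF sm]) (use z R in auto)
    then have "(\<lambda>n. (diffs ^^ N) a n * z^n / fact N * R^N) sums ((\<Sum>n. (diffs ^^ N) a n * z^n) / fact N * R^N)"
      by (intro sums_mult2 sums_divide summable_sums)
    moreover have "norm (\<Sum>n. (diffs ^^ N) a n * z^n / fact N * R^N) \<le> (\<Sum>n. t n)"
      by (rule norm_suminf_le[OF _ st]) (use R in \<open>simp add: t_def abs_mult\<close>)
    ultimately have "\<bar>(\<Sum>n. (diffs ^^ N) a n * z^n) / fact N * R^N\<bar> \<le> (\<Sum>n. t n)"
      by (simp add: sums_iff)
    then have "\<bar>(deriv ^^ N) f \<xi>\<bar> / fact N * R^N \<le> (\<Sum>n. t n)"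
      using eq[of \<xi> N] \<xi> R by (simp add: z_def abs_mult)
    also have "\<dots> \<le> (\<Sum>n. g n)" by (intro suminf_le tg st sg)
    also have "\<dots> \<le> S"
      unfolding S_def g_def
      using suminf_split_initial_segment[OF absS, of N] R
      by (simp add: sum_nonneg)
    finally show ?thesis .
  qed
  with R S0 show thesis using that by blast
qed

lemma real_analytic_Cauchy_bound_compact:
  assumes "real_analytic f" "compact K"
  obtains \<rho> B where "\<rho> > 0" "B \<ge> 0"
    "\<And>y \<xi> N. y \<in> K \<Longrightarrow> \<bar>\<xi> - y\<bar> \<le> \<rho> \<Longrightarrow> \<bar>(deriv ^^ N) f \<xi>\<bar> / fact N * \<rho>^N \<le> B"
proof -
  have "\<forall>x. \<exists>R S. R > 0 \<and> S \<ge> 0 \<and>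
      (\<forall>\<xi> N. \<bar>\<xi> - x\<bar> \<le> R \<longrightarrow> \<bar>(deriv ^^ N) f \<xi>\<bar> / fact N * R^N \<le> S)"
  proof
    fix x show "\<exists>R S. R > 0 \<and> S \<ge> 0 \<and>
        (\<forall>\<xi> N. \<bar>\<xi> - x\<bar> \<le> R \<longrightarrow> \<bar>(deriv ^^ N) f \<xi>\<bar> / fact N * R^N \<le> S)"
      by (rule real_analytic_Cauchy_bound_at[OF assms(1), of x]) blast
  qed
  then obtain R where "\<forall>x. \<exists>S. R x > 0 \<and> S \<ge> 0 \<and>
      (\<forall>\<xi> N. \<bar>\<xi> - x\<bar> \<le> R x \<longrightarrow> \<bar>(deriv ^^ N) f \<xi>\<bar> / fact N * R x^N \<le> S)"
    unfolding choice_iff by blast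
  then obtain S where "\<forall>x. R x > 0 \<and> S x \<ge> 0 \<and>
      (\<forall>\<xi> N. \<bar>\<xi> - x\<bar> \<le> R x \<longrightarrow> \<bar>(deriv ^^ N) f \<xi>\<bar> / fact N * R x^N \<le> S x)"
    unfolding choice_iff by blast
  then have R: "\<And>x. R x > 0" and S: "\<And>x. S x \<ge> 0"
    and RS: "\<And>x \<xi> N. \<bar>\<xi> - x\<bar> \<le> R x \<Longrightarrow> \<bar>(deriv ^^ N) f \<xi>\<bar> / fact N * R x^N \<le> S x"
    by blast+
  have cover: "K \<subseteq> (\<Union>x\<in>K. ball x (R x / 2))"
  proof
    fix y assume "y \<in> K"
    then show "y \<in> (\<Union>x\<in>K. ball x (R x / 2))" using R[of y] by (intro UN_I[of y]) auto
  qed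
  obtain F where F: "F \<subseteq> K" "finite F" "K \<subseteq> (\<Union>x\<in>F. ball x (R x / 2))"
    by (rule compactE_image[OF assms(2) _ cover]) auto
  define \<rho> where "\<rho> = Min (insert 1 ((\<lambda>x. R x / 2) ` F))"
  define B where "B = (\<Sum>x\<in>F. S x)"
  have \<rho>: "\<rho> > 0" unfolding \<rho>_def using F(2) R by (subst Min_gr_iff) auto
  have \<rho>_le: "\<rho> \<le> R x / 2" if "x \<in> F" for x
    unfolding \<rho>_def using F(2) that by (intro Min_le) auto
  have B: "B \<ge> 0" unfolding B_def using S by (simp add: sum_nonneg)
  have bound: "\<bar>(deriv ^^ N) f \<xi>\<bar> / fact N * \<rho>^N \<le> B" if "y \<in> K" "\<bar>\<xi> - y\<bar> \<le> \<rho>" for y \<xi> N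
  proof -
    from F(3) \<open>y \<in> K\<close> obtain x where x: "x \<in> F" "y \<in> ball x (R x / 2)" by blast
    have "\<bar>\<xi> - x\<bar> \<le> R x"
      using x(2) that(2) \<rho>_le[OF x(1)] unfolding mem_ball dist_real_def by arith
    have "\<bar>(deriv ^^ N) f \<xi>\<bar> / fact N * \<rho>^N \<le> \<bar>(deriv ^^ N) f \<xi>\<bar> / fact N * R x^N"
      using \<rho> \<rho>_le[OF x(1)] R[of x] by (intro mult_left_mono power_mono) auto
    also have "\<dots> \<le> S x" by (rule RS) fact
    also have "\<dots> \<le> B" unfolding B_def using F(2) x(1) S by (intro member_le_sum) auto
    finally show ?thesis .
  qed

  show thesis using \<rho> B bound by (rule that)
qed

lemma real_analytic_Taylor_sums:
  assumes "real_analytic f" "\<rho> > 0"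
    and bound: "\<And>\<xi> N. \<bar>\<xi> - y\<bar> \<le> \<rho> \<Longrightarrow> \<bar>(deriv ^^ N) f \<xi>\<bar> / fact N * \<rho>^N \<le> B"
    and "\<bar>z\<bar> < \<rho>"
  shows "(\<lambda>n. (deriv ^^ n) f y / fact n * z^n) sums f (y + z)"
proof (cases "z = 0")
  case True
  then show ?thesis using powser_sums_zero[of "\<lambda>n. (deriv ^^ n) f y / fact n"] by simp
next
  case False
  define P where "P N = (\<Sum>m<N. (deriv ^^ m) f y / fact m * z^m)" for N
  have remainder: "\<bar>f (y + z) - P N\<bar> \<le> B * (\<bar>z\<bar> / \<rho>)^N" if "N > 0" for N
  proof -
    have "\<exists>t. (if y + z < y then y + z < t \<and> t < y else y < t \<and> t < y + z) \<and>
        f (y + z) = (\<Sum>m<N. (deriv ^^ m) f y / fact m * (y + z - y)^m)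
                    + (deriv ^^ N) f t / fact N * (y + z - y)^N"
      by (rule Taylor[of N "\<lambda>m. (deriv ^^ m) f" f "y - \<bar>z\<bar>" "y + \<bar>z\<bar>" y "y + z"])
         (use \<open>N > 0\<close> False real_analytic_has_iterated_deriv[OF assms(1)] in auto)
    then obtain t where t: "if y + z < y then y + z < t \<and> t < y else y < t \<and> t < y + z"
      and taylor: "f (y + z) = (\<Sum>m<N. (deriv ^^ m) f y / fact m * (y + z - y)^m)
                               + (deriv ^^ N) f t / fact N * (y + z - y)^N"
      by blast
    have "\<bar>t - y\<bar> \<le> \<rho>" using t \<open>\<bar>z\<bar> < \<rho>\<close> by (auto split: if_splits)
    have "\<bar>f (y + z) - P N\<bar> = (\<bar>(deriv ^^ N) f t\<bar> / fact N * \<rho>^N) * (\<bar>z\<bar> / \<rho>)^N"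
      using taylor \<open>\<rho> > 0\<close> by (simp add: P_def abs_mult power_abs power_divide)
    also have "\<dots> \<le> B * (\<bar>z\<bar> / \<rho>)^N"
      by (intro mult_right_mono bound \<open>\<bar>t - y\<bar> \<le> \<rho>\<close>) (use \<open>\<rho> > 0\<close> in auto)
    finally show ?thesis .
  qed
  have "(\<lambda>N. B * (\<bar>z\<bar> / \<rho>)^N) \<longlonglongrightarrow> 0"
    by (intro tendsto_mult_right_zero LIMSEQ_power_zero) (use assms in auto)
  then have "(\<lambda>N. f (y + z) - P N) \<longlonglongrightarrow> 0"
    by (rule Lim_null_comparison[rotated])
       (use remainder in \<open>auto intro: eventually_sequentiallyI[of 1]\<close>)
  from tendsto_diff[OF tendsto_const this, of "f (y + z)"]
  have "P \<longlonglongrightarrow> f (y + z)" by simp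
  then show ?thesis unfolding sums_def P_def .
qed

lemma abs_le_Sup_abs_image:
  fixes P :: "real \<Rightarrow> real"
  assumes "continuous_on {-1..1} P" "s \<in> {-1..1}"
  shows "\<bar>P s\<bar> \<le> Sup ((\<lambda>s. \<bar>P s\<bar>) ` {-1..1})"
proof -
  have "compact ((\<lambda>s. \<bar>P s\<bar>) ` {-1..1})"
    by (intro compact_continuous_image continuous_on_rabs assms(1) compact_Icc)
  then have "bdd_above ((\<lambda>s. \<bar>P s\<bar>) ` {-1..1})"
    by (intro bounded_imp_bdd_above compact_imp_bounded)
  then show ?thesis using assms(2) by (intro cSup_upper) auto
qed

lemma st_norm_ge:
  assumes "continuous_on {-1..1} P1" "continuous_on {-1..1} P2"
  shows "\<bar>p1\<bar> \<le> st_norm (p1,p2,x1,x2,P1,P2)" "\<bar>p2\<bar> \<le> st_norm (p1,p2,x1,x2,P1,P2)"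
    "\<bar>x1\<bar> \<le> st_norm (p1,p2,x1,x2,P1,P2)" "\<bar>x2\<bar> \<le> st_norm (p1,p2,x1,x2,P1,P2)"
    "\<And>s. s \<in> {-1..1} \<Longrightarrow> \<bar>P1 s\<bar> \<le> st_norm (p1,p2,x1,x2,P1,P2)"
    "\<And>s. s \<in> {-1..1} \<Longrightarrow> \<bar>P2 s\<bar> \<le> st_norm (p1,p2,x1,x2,P1,P2)"
proof -
  have M: "a \<in> {\<bar>p1\<bar>, \<bar>p2\<bar>, \<bar>x1\<bar>, \<bar>x2\<bar>, Sup ((\<lambda>s. \<bar>P1 s\<bar>) ` {-1..1}),
      Sup ((\<lambda>s. \<bar>P2 s\<bar>) ` {-1..1})} \<Longrightarrow> a \<le> st_norm (p1,p2,x1,x2,P1,P2)" for a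
    unfolding st_norm_def by (simp only: prod.case) (rule Max.coboundedI, simp_all)
  show "\<bar>p1\<bar> \<le> st_norm (p1,p2,x1,x2,P1,P2)" "\<bar>p2\<bar> \<le> st_norm (p1,p2,x1,x2,P1,P2)"
    "\<bar>x1\<bar> \<le> st_norm (p1,p2,x1,x2,P1,P2)" "\<bar>x2\<bar> \<le> st_norm (p1,p2,x1,x2,P1,P2)"
    by (rule M; simp)+
  show "\<bar>P1 s\<bar> \<le> st_norm (p1,p2,x1,x2,P1,P2)" "\<bar>P2 s\<bar> \<le> st_norm (p1,p2,x1,x2,P1,P2)"
    if "s \<in> {-1..1}" for s
    using abs_le_Sup_abs_image[OF assms(1) that] abs_le_Sup_abs_image[OF assms(2) that]
      M[of "Sup ((\<lambda>s. \<bar>P1 s\<bar>) ` {-1..1})"] M[of "Sup ((\<lambda>s. \<bar>P2 s\<bar>) ` {-1..1})"]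
    by simp_all
qed

lemma st_norm_le:
  assumes "\<bar>p1\<bar> \<le> B" "\<bar>p2\<bar> \<le> B" "\<bar>x1\<bar> \<le> B" "\<bar>x2\<bar> \<le> B"
    "\<And>s. s \<in> {-1..1} \<Longrightarrow> \<bar>P1 s\<bar> \<le> B" "\<And>s. s \<in> {-1..1} \<Longrightarrow> \<bar>P2 s\<bar> \<le> B"
  shows "st_norm (p1,p2,x1,x2,P1,P2) \<le> B"
proof -
  have "Sup ((\<lambda>s. \<bar>P1 s\<bar>) ` {-1..1}) \<le> B" "Sup ((\<lambda>s. \<bar>P2 s\<bar>) ` {-1..1}) \<le> B"
    using assms(5,6) by (auto intro!: cSup_least)
  with assms(1-4) show ?thesis
    unfolding st_norm_def prod.case by (intro Max.boundedI) auto
qed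

lemma st_norm_nonneg: "st_norm U \<ge> 0"
proof -
  obtain p1 p2 x1 x2 P1 P2 where U: "U = (p1,p2,x1,x2,P1,P2)" by (cases U)
  have "\<bar>p1\<bar> \<le> st_norm U"
    unfolding U st_norm_def by (simp only: prod.case) (rule Max.coboundedI, simp_all)
  then show ?thesis by linarith
qed

lemma st_norm_zero: "st_norm st_zero = 0"
proof -
  have "st_norm st_zero \<le> 0" unfolding st_zero_def by (rule st_norm_le) auto
  with st_norm_nonneg[of st_zero] show ?thesis by linarith
qed

lemma ext_norm_ge: "st_norm (fst x) \<le> ext_norm x" "\<bar>snd x\<bar> \<le> ext_norm x" "0 \<le> ext_norm x"
  unfolding ext_norm_def using st_norm_nonneg[of "fst x"] by auto

lemma Asp_if_Xsp: "X \<in> Xsp \<Longrightarrow> X \<in> Asp"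
  by (auto simp: Xsp_def Asp_def)

lemma st_add_in_Asp: "X \<in> Asp \<Longrightarrow> Z \<in> Asp \<Longrightarrow> st_add X Z \<in> Asp"
  by (cases X; cases Z) (auto simp: Asp_def st_add_def intro!: continuous_intros)

lemma st_zero_in_Xsp: "st_zero \<in> Xsp"
  by (simp add: st_zero_def Xsp_def)

lemma st_add_zero: "st_add U st_zero = U"
  by (cases U) (simp add: st_add_def st_zero_def)

lemma fst_ext_add_scale:
  "fst (ext_add (ext_scale a x) (ext_scale b y)) = st_add (st_scale a (fst x)) (st_scale b (fst y))"
  by (simp add: ext_add_def ext_scale_def)

lemma snd_ext_add_scale: "snd (ext_add (ext_scale a x) (ext_scale b y)) = a * snd x + b * snd y"
  by (simp add: ext_add_def ext_scale_def)

section \<open>Bounded multilinear forms\<close>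

lemma multilin_relD:
  assumes "multilin_rel Y n M C"
  shows "\<And>v w. (\<And>i. i < n \<Longrightarrow> v i = w i) \<Longrightarrow> M v = M w"
    "\<And>v i a b s t. (\<And>j. j < n \<Longrightarrow> v j \<in> Y) \<Longrightarrow> i < n \<Longrightarrow> a \<in> Y \<Longrightarrow> b \<in> Y \<Longrightarrow>
        M (v(i := ext_add (ext_scale s a) (ext_scale t b))) = s * M (v(i := a)) + t * M (v(i := b))"
    "0 \<le> C"
    "\<And>v. (\<And>i. i < n \<Longrightarrow> v i \<in> Y) \<Longrightarrow> \<bar>M v\<bar> \<le> C * (\<Prod>i<n. ext_norm (v i))"
  using assms unfolding multilin_rel_def by blast+

lemma multilin_relI:
  assumes "\<And>v w. (\<And>i. i < n \<Longrightarrow> v i = w i) \<Longrightarrow> M v = M w"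
    "\<And>v i a b s t. (\<And>j. j < n \<Longrightarrow> v j \<in> Y) \<Longrightarrow> i < n \<Longrightarrow> a \<in> Y \<Longrightarrow> b \<in> Y \<Longrightarrow>
        M (v(i := ext_add (ext_scale s a) (ext_scale t b))) = s * M (v(i := a)) + t * M (v(i := b))"
    "0 \<le> C"
    "\<And>v. (\<And>i. i < n \<Longrightarrow> v i \<in> Y) \<Longrightarrow> \<bar>M v\<bar> \<le> C * (\<Prod>i<n. ext_norm (v i))"
  shows "multilin_rel Y n M C"
  using assms unfolding multilin_rel_def by blast

lemma multilin_rel_cong:
  "multilin_rel Y n M C \<Longrightarrow> (\<And>v. M v = M' v) \<Longrightarrow> C = C' \<Longrightarrow> multilin_rel Y n M' C'"
  by (metis ext)

lemma multilin_rel_zero: "multilin_rel Y n (\<lambda>v. 0) 0"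
  unfolding multilin_rel_def by simp

lemma multilin_rel_lincomb:
  assumes M: "multilin_rel Y n M C" and M': "multilin_rel Y n M' C'"
  shows "multilin_rel Y n (\<lambda>v. a * M v + b * M' v) (\<bar>a\<bar> * C + \<bar>b\<bar> * C')"
proof (rule multilin_relI)
  note M = multilin_relD[OF M] and M' = multilin_relD[OF M']
  show "a * M v + b * M' v = a * M w + b * M' w" if "\<And>i. i < n \<Longrightarrow> v i = w i" for v w
    using M(1)[OF that] M'(1)[OF that] by simp
  show "a * M (v(i := ext_add (ext_scale s x) (ext_scale t y)))
          + b * M' (v(i := ext_add (ext_scale s x) (ext_scale t y)))
        = s * (a * M (v(i := x)) + b * M' (v(i := x))) + t * (a * M (v(i := y)) + b * M' (v(i := y)))"
    if "\<And>j. j < n \<Longrightarrow> v j \<in> Y" "i < n" "x \<in> Y" "y \<in> Y" for v i x y s t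
    using M(2)[OF that, where s = s and t = t] M'(2)[OF that, where s = s and t = t] by (simp add: algebra_simps)
  show "0 \<le> \<bar>a\<bar> * C + \<bar>b\<bar> * C'" using M(3) M'(3) by simp
  show "\<bar>a * M v + b * M' v\<bar> \<le> (\<bar>a\<bar> * C + \<bar>b\<bar> * C') * (\<Prod>i<n. ext_norm (v i))"
    if "\<And>i. i < n \<Longrightarrow> v i \<in> Y" for v
  proof -
    have "\<bar>a * M v + b * M' v\<bar> \<le> \<bar>a\<bar> * \<bar>M v\<bar> + \<bar>b\<bar> * \<bar>M' v\<bar>"
      by (simp add: abs_mult abs_triangle_ineq[THEN order_trans])
    also have "\<dots> \<le> \<bar>a\<bar> * (C * (\<Prod>i<n. ext_norm (v i))) + \<bar>b\<bar> * (C' * (\<Prod>i<n. ext_norm (v i)))"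
      by (intro add_mono mult_left_mono M(4) M'(4) that) auto
    finally show ?thesis by (simp add: algebra_simps)
  qed
qed

lemma multilin_rel_add:
  "multilin_rel Y n M C \<Longrightarrow> multilin_rel Y n M' C' \<Longrightarrow> multilin_rel Y n (\<lambda>v. M v + M' v) (C + C')"
  using multilin_rel_lincomb[of Y n M C M' C' 1 1] by simp

lemma multilin_rel_diff:
  "multilin_rel Y n M C \<Longrightarrow> multilin_rel Y n M' C' \<Longrightarrow> multilin_rel Y n (\<lambda>v. M v - M' v) (C + C')"
  using multilin_rel_lincomb[of Y n M C M' C' 1 "-1"] by simp

lemma multilin_rel_integral_prod:
  fixes g :: "real \<Rightarrow> real" and \<phi> :: "nat \<Rightarrow> ext \<Rightarrow> real \<Rightarrow> real"
  assumes cont_g: "continuous_on {-1..0} g"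
    and bound_g: "\<And>s. s \<in> {-1..0} \<Longrightarrow> \<bar>g s\<bar> \<le> G"
    and linear: "\<And>i x y a b s. x \<in> Y \<Longrightarrow> y \<in> Y \<Longrightarrow>
        \<phi> i (ext_add (ext_scale a x) (ext_scale b y)) s = a * \<phi> i x s + b * \<phi> i y s"
    and cont: "\<And>i x. x \<in> Y \<Longrightarrow> continuous_on {-1..0} (\<phi> i x)"
    and bound: "\<And>i x s. x \<in> Y \<Longrightarrow> s \<in> {-1..0} \<Longrightarrow> \<bar>\<phi> i x s\<bar> \<le> L * ext_norm x"
    and "0 \<le> L"
  shows "multilin_rel Y n (\<lambda>v. integral {-1..0} (\<lambda>s. g s * (\<Prod>i<n. \<phi> i (v i) s))) (G * L^n)"
proof (rule multilin_relI)
  let ?M = "\<lambda>v. integral {-1..0} (\<lambda>s. g s * (\<Prod>i<n. \<phi> i (v i) s))"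
  have G: "0 \<le> G" using bound_g[of "-1"] by simp
  then show "0 \<le> G * L^n" using \<open>0 \<le> L\<close> by simp
  show "?M v = ?M w" if "\<And>i. i < n \<Longrightarrow> v i = w i" for v w
  proof -
    have "(\<Prod>i<n. \<phi> i (v i) s) = (\<Prod>i<n. \<phi> i (w i) s)" for s
      using that by (intro prod.cong) auto
    then show ?thesis by simp
  qed
  show "?M (v(i := ext_add (ext_scale s a) (ext_scale t b))) = s * ?M (v(i := a)) + t * ?M (v(i := b))"
    if vY: "\<And>j. j < n \<Longrightarrow> v j \<in> Y" and i: "i < n" and a: "a \<in> Y" and b: "b \<in> Y" for v i a b s t
  proof -
    define Q where "Q \<sigma> = (\<Prod>j\<in>{..<n}-{i}. \<phi> j (v j) \<sigma>)" for \<sigma>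
    have split: "(\<Prod>j<n. \<phi> j ((v(i := x)) j) \<sigma>) = \<phi> i x \<sigma> * Q \<sigma>" for x \<sigma>
    proof -
      have "(\<Prod>j<n. \<phi> j ((v(i := x)) j) \<sigma>)
          = \<phi> i x \<sigma> * (\<Prod>j\<in>{..<n}-{i}. \<phi> j ((v(i := x)) j) \<sigma>)"
        using i by (subst prod.remove[of "{..<n}" i]) auto
      also have "(\<Prod>j\<in>{..<n}-{i}. \<phi> j ((v(i := x)) j) \<sigma>) = Q \<sigma>"
        unfolding Q_def by (intro prod.cong) auto
      finally show ?thesis .
    qed
    have cQ: "continuous_on {-1..0} Q"
      unfolding Q_def by (intro continuous_on_prod cont) (use vY in auto)
    have "?M (v(i := ext_add (ext_scale s a) (ext_scale t b))) =
        integral {-1..0} (\<lambda>\<sigma>. s * (g \<sigma> * (\<phi> i a \<sigma> * Q \<sigma>)) + t * (g \<sigma> * (\<phi> i b \<sigma> * Q \<sigma>)))"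
      unfolding split linear[OF a b] by (simp add: algebra_simps)
    also have "\<dots> = s * ?M (v(i := a)) + t * ?M (v(i := b))"
      unfolding split
      by (subst integral_add) (auto intro!: integrable_continuous_interval continuous_intros
          cont_g cont a b cQ)
    finally show ?thesis .
  qed
  show "\<bar>?M v\<bar> \<le> G * L^n * (\<Prod>i<n. ext_norm (v i))" if vY: "\<And>i. i < n \<Longrightarrow> v i \<in> Y" for v
  proof -
    have "\<bar>g s * (\<Prod>i<n. \<phi> i (v i) s)\<bar> \<le> G * L^n * (\<Prod>i<n. ext_norm (v i))"
      if s: "s \<in> {-1..0}" for s
    proof -
      have "\<bar>g s * (\<Prod>i<n. \<phi> i (v i) s)\<bar> = \<bar>g s\<bar> * (\<Prod>i<n. \<bar>\<phi> i (v i) s\<bar>)"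
        by (simp add: abs_mult abs_prod)
      also have "\<dots> \<le> G * (\<Prod>i<n. L * ext_norm (v i))"
        by (intro mult_mono bound_g s prod_mono conjI bound) (use vY s G in \<open>auto intro: prod_nonneg\<close>)
      finally show ?thesis by (simp add: prod.distrib)
    qed
    moreover have "continuous_on {-1..0} (\<lambda>s. g s * (\<Prod>i<n. \<phi> i (v i) s))"
      by (intro continuous_intros continuous_on_prod cont_g cont vY) simp
    ultimately show ?thesis
      using integral_bound[of "-1" 0 "\<lambda>s. g s * (\<Prod>i<n. \<phi> i (v i) s)"] by simp
  qed
qed

definition prod_form :: "real \<Rightarrow> nat \<Rightarrow> (nat \<Rightarrow> ext \<Rightarrow> real) \<Rightarrow> (nat \<Rightarrow> ext) \<Rightarrow> real" where
  "prod_form k n \<phi> v = k * (\<Prod>i<n. \<phi> i (v i))"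

lemma multilin_rel_prod_form:
  assumes "\<And>i x y a b. x \<in> Y \<Longrightarrow> y \<in> Y \<Longrightarrow>
        \<phi> i (ext_add (ext_scale a x) (ext_scale b y)) = a * \<phi> i x + b * \<phi> i y"
    and "\<And>i x. x \<in> Y \<Longrightarrow> \<bar>\<phi> i x\<bar> \<le> L * ext_norm x" "0 \<le> L"
  shows "multilin_rel Y n (prod_form k n \<phi>) (\<bar>k\<bar> * L^n)"
  using multilin_rel_integral_prod[where g = "\<lambda>s. k" and G = "\<bar>k\<bar>" and \<phi> = "\<lambda>i x s. \<phi> i x"]
    assms unfolding prod_form_def by simp

lemma multilin_rel_1_linear:
  assumes "multilin_rel Y 1 M C" "x \<in> Y" "y \<in> Y"
  shows "M (\<lambda>_. ext_add (ext_scale a x) (ext_scale b y)) = a * M (\<lambda>_. x) + b * M (\<lambda>_. y)"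
proof -
  note M = multilin_relD[OF assms(1)]
  have upd: "M (\<lambda>_. z) = M ((\<lambda>_. x)(0 := z))" for z
    by (rule M(1)) simp
  have "M ((\<lambda>_. x)(0 := ext_add (ext_scale a x) (ext_scale b y)))
      = a * M ((\<lambda>_. x)(0 := x)) + b * M ((\<lambda>_. x)(0 := y))"
    by (rule M(2)) (use assms(2,3) in auto)
  then show ?thesis by (simp only: upd[symmetric])
qed

lemma multilin_rel_const_zero_vector:
  assumes "\<And>n. multilin_rel Y n (M n) (C n)" "z \<in> Y" "ext_norm z = 0"
    and "(\<lambda>n. M n (\<lambda>_. z)) sums y"
  shows "y = M 0 v"
proof -
  have "M n (\<lambda>_. z) = 0" if "n \<ge> 1" for n
    using multilin_relD(4)[OF assms(1), of n "\<lambda>_. z"] assms(2,3) that by (simp add: power_0_left)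
  then have "(\<lambda>n. M n (\<lambda>_. z)) sums (\<Sum>n\<in>{0}. M n (\<lambda>_. z))"
    by (intro sums_finite) auto
  with assms(4) have "y = M 0 (\<lambda>_. z)" by (simp add: sums_unique2)
  also have "\<dots> = M 0 v" by (rule multilin_relD(1)[OF assms(1)]) simp
  finally show ?thesis .
qed

section \<open>The power series of J\<close>

text \<open>Abstracts stretch1 and stretch2 (defined below), the arguments of V1' and V2' in J.\<close>
locale stretch =
  fixes A :: "st \<Rightarrow> real \<Rightarrow> real"
  assumes linear: "A (st_add (st_scale a X) (st_scale b Z)) s = a * A X s + b * A Z s"
    and continuous: "X \<in> Asp \<Longrightarrow> continuous_on {-1..0} (A X)"
    and bounded: "X \<in> Asp \<Longrightarrow> s \<in> {-1..0} \<Longrightarrow> \<bar>A X s\<bar> \<le> 2 * st_norm X"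

definition taylor_form :: "(real \<Rightarrow> real) \<Rightarrow> (st \<Rightarrow> real \<Rightarrow> real) \<Rightarrow> st \<Rightarrow> nat \<Rightarrow> (nat \<Rightarrow> ext) \<Rightarrow> real"
  where "taylor_form f A U n v =
    integral {-1..0} (\<lambda>s. (deriv ^^ n) f (A U s) / fact n * (\<Prod>i<n. A (fst (v i)) s))"

context stretch
begin

lemma add: "A (st_add X Z) s = A X s + A Z s"
  using linear[of 1 X 1 Z s] by (simp add: st_scale_def split_beta)

lemma Cauchy_bound:
  assumes "real_analytic f" "U \<in> Asp"
  obtains \<rho> B where "\<rho> > 0"
    "\<And>s \<xi> n. s \<in> {-1..0} \<Longrightarrow> \<bar>\<xi> - A U s\<bar> \<le> \<rho> \<Longrightarrow> \<bar>(deriv ^^ n) f \<xi>\<bar> / fact n * \<rho>^n \<le> B"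
proof -
  have "compact (A U ` {-1..0})"
    by (intro compact_continuous_image continuous assms(2) compact_Icc)
  then show thesis
  proof (rule real_analytic_Cauchy_bound_compact[OF assms(1)])
    fix \<rho> B :: real
    assume "\<rho> > 0" and bound: "\<And>y \<xi> n. y \<in> A U ` {-1..0} \<Longrightarrow> \<bar>\<xi> - y\<bar> \<le> \<rho> \<Longrightarrow>
      \<bar>(deriv ^^ n) f \<xi>\<bar> / fact n * \<rho>^n \<le> B"
    show thesis by (rule that[OF \<open>\<rho> > 0\<close>]) (rule bound; simp)
  qed
qed

lemma multilin_rel_taylor_form:
  assumes f: "real_analytic f" and U: "U \<in> Asp" and "\<rho> > 0"
    and bound: "\<And>s n. s \<in> {-1..0} \<Longrightarrow> \<bar>(deriv ^^ n) f (A U s)\<bar> / fact n * \<rho>^n \<le> B"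
  shows "multilin_rel (Xsp \<times> UNIV) n (taylor_form f A U n) (B * (2/\<rho>)^n)"
proof -
  have "multilin_rel (Xsp \<times> UNIV) n (\<lambda>v. integral {-1..0}
      (\<lambda>s. (deriv ^^ n) f (A U s) / fact n * (\<Prod>i<n. A (fst (v i)) s))) (B / \<rho>^n * 2^n)"
  proof (rule multilin_rel_integral_prod)
    show "continuous_on {-1..0} (\<lambda>s. (deriv ^^ n) f (A U s) / fact n)"
      by (intro continuous_intros continuous_on_compose2[OF
            real_analytic_continuous_on_iterated_deriv[OF f, of UNIV] continuous[OF U]]) auto
    show "\<bar>(deriv ^^ n) f (A U s) / fact n\<bar> \<le> B / \<rho>^n" if "s \<in> {-1..0}" for s
      using bound[OF that, of n] \<open>\<rho> > 0\<close> by (simp add: pos_le_divide_eq)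
    show "A (fst (ext_add (ext_scale a x) (ext_scale b y))) s = a * A (fst x) s + b * A (fst y) s"
      for a b s and x y :: ext
      unfolding fst_ext_add_scale linear ..
    show "continuous_on {-1..0} (A (fst x))" if "x \<in> Xsp \<times> UNIV" for x
      using that by (intro continuous Asp_if_Xsp) auto
    show "\<bar>A (fst x) s\<bar> \<le> 2 * ext_norm x" if "x \<in> Xsp \<times> UNIV" "s \<in> {-1..0}" for x s
      using bounded[of "fst x" s] ext_norm_ge(1)[of x] that Asp_if_Xsp[of "fst x"] by auto
  qed simp
  then show ?thesis
    by (rule multilin_rel_cong) (simp_all add: taylor_form_def power_divide)
qed

lemma taylor_form_sums:
  assumes f: "real_analytic f" and U: "U \<in> Asp" and \<rho>: "\<rho> > 0"
    and bound: "\<And>s \<xi> n. s \<in> {-1..0} \<Longrightarrow> \<bar>\<xi> - A U s\<bar> \<le> \<rho> \<Longrightarrow> \<bar>(deriv ^^ n) f \<xi>\<bar> / fact n * \<rho>^n \<le> B"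
    and h: "fst h \<in> Asp" "st_norm (fst h) < \<rho> / 2"
  shows "(\<lambda>n. taylor_form f A U n (\<lambda>_. h)) sums integral {-1..0} (\<lambda>s. f (A (st_add U (fst h)) s))"
proof -
  define H where "H = fst h"
  note H = h[folded H_def]
  define g where "g n s = (deriv ^^ n) f (A U s) / fact n" for n s
  define q where "q = 2 * st_norm H / \<rho>"
  have q: "0 \<le> q" "q < 1" using H(2) \<rho> st_norm_nonneg[of H] by (auto simp: q_def field_simps)
  have B: "B \<ge> 0" using bound[of "-1" "A U (-1)" 0] \<rho> by (simp add: order_trans[OF abs_ge_zero])
  have cont_deriv: "continuous_on {-1..0} (\<lambda>s. (deriv ^^ n) f (A U s))" for n
    by (intro continuous_on_compose2[OF real_analytic_continuous_on_iterated_deriv[OF f, of UNIV]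
          continuous[OF U]]) auto
  have cont_g: "continuous_on {-1..0} (g n)" for n
    unfolding g_def by (intro continuous_intros cont_deriv) auto
  have term_bound: "\<bar>g n s * A H s ^ n\<bar> \<le> B * q^n" if s: "s \<in> {-1..0}" for n s
  proof -
    have "\<bar>g n s * A H s ^ n\<bar> \<le> B / \<rho>^n * (2 * st_norm H)^n"
      unfolding abs_mult power_abs
      using bound[OF s, of "A U s" n] \<rho> B bounded[OF H(1) s]
      by (intro mult_mono power_mono) (auto simp: g_def pos_le_divide_eq)
    then show ?thesis by (simp add: q_def power_divide)
  qed
  define F where "F k s = (\<Sum>n<k. g n s * A H s ^ n)" for k s
  have cont_F: "continuous_on {-1..0} (F k)" for k
    unfolding F_def by (intro continuous_intros cont_g continuous H(1))
  have F_bound: "norm (F k s) \<le> B / (1 - q)" if "s \<in> {-1..0}" for k s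
  proof -
    have "norm (F k s) \<le> (\<Sum>n<k. B * q^n)"
      unfolding F_def real_norm_def by (rule order_trans[OF sum_abs sum_mono[OF term_bound[OF that]]])
    also have "\<dots> \<le> (\<Sum>n. B * q^n)"
      by (intro sum_le_suminf summable_mult summable_geometric) (use q B in auto)
    also have "\<dots> = B / (1 - q)"
      using suminf_mult[OF summable_geometric[of q], of B] suminf_geometric[of q] q by simp
    finally show ?thesis .
  qed
  have F_lim: "(\<lambda>k. F k s) \<longlonglongrightarrow> f (A U s + A H s)" if s: "s \<in> {-1..0}" for s
  proof -
    have "\<bar>A H s\<bar> < \<rho>" using bounded[OF H(1) s] H(2) by simp
    with real_analytic_Taylor_sums[OF f \<rho> bound[OF s]]
    show ?thesis unfolding sums_def F_def g_def by blast
  qed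
  have "(\<lambda>k. integral {-1..0} (F k)) \<longlonglongrightarrow> integral {-1..0} (\<lambda>s. f (A U s + A H s))"
    by (rule dominated_convergence(2)[where h = "\<lambda>_. B / (1 - q)"])
       (use cont_F F_bound F_lim in \<open>auto intro: integrable_continuous_interval\<close>)
  moreover have "integral {-1..0} (F k) = (\<Sum>n<k. taylor_form f A U n (\<lambda>_. h))" for k
    unfolding F_def
    by (subst integral_sum) (auto simp: taylor_form_def g_def H_def
        intro!: integrable_continuous_interval continuous_intros cont_deriv continuous h(1))
  ultimately show ?thesis unfolding sums_def H_def by (simp add: add)
qed

end

definition stretch1 :: "st \<Rightarrow> real \<Rightarrow> real" where
  "stretch1 U = (case U of (p1,p2,x1,x2,P1,P2) \<Rightarrow> \<lambda>s. P2 (s + 1) - P1 s)"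

definition stretch2 :: "st \<Rightarrow> real \<Rightarrow> real" where
  "stretch2 U = (case U of (p1,p2,x1,x2,P1,P2) \<Rightarrow> \<lambda>s. P1 (s + 1) - P2 s)"

lemma continuous_on_shift_neg1_0:
  fixes P :: "real \<Rightarrow> real"
  assumes "continuous_on {-1..1} P"
  shows "continuous_on {-1..0} (\<lambda>s. P (s + 1))" "continuous_on {-1..0} P"
  by (rule continuous_on_compose2[OF assms], auto intro!: continuous_intros)
     (rule continuous_on_subset[OF assms], auto)

interpretation stretch1: stretch stretch1
proof
  fix X Z :: st and a b s :: real
  show "stretch1 (st_add (st_scale a X) (st_scale b Z)) s = a * stretch1 X s + b * stretch1 Z s"
    by (cases X; cases Z) (simp add: stretch1_def st_add_def st_scale_def algebra_simps)
  assume "X \<in> Asp"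
  then obtain p1 p2 x1 x2 P1 P2 where X: "X = (p1,p2,x1,x2,P1,P2)"
    and P: "continuous_on {-1..1} P1" "continuous_on {-1..1} P2"
    by (cases X) (auto simp: Asp_def)
  show "continuous_on {-1..0} (stretch1 X)"
    unfolding X stretch1_def prod.case by (intro continuous_on_diff continuous_on_shift_neg1_0 P)
  assume "s \<in> {-1..0}"
  then have "\<bar>P2 (s + 1)\<bar> \<le> st_norm X" "\<bar>P1 s\<bar> \<le> st_norm X"
    unfolding X by (auto intro: st_norm_ge(5,6)[OF P])
  then show "\<bar>stretch1 X s\<bar> \<le> 2 * st_norm X" by (simp add: X stretch1_def)
qed

interpretation stretch2: stretch stretch2
proof
  fix X Z :: st and a b s :: real
  show "stretch2 (st_add (st_scale a X) (st_scale b Z)) s = a * stretch2 X s + b * stretch2 Z s"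
    by (cases X; cases Z) (simp add: stretch2_def st_add_def st_scale_def algebra_simps)
  assume "X \<in> Asp"
  then obtain p1 p2 x1 x2 P1 P2 where X: "X = (p1,p2,x1,x2,P1,P2)"
    and P: "continuous_on {-1..1} P1" "continuous_on {-1..1} P2"
    by (cases X) (auto simp: Asp_def)
  show "continuous_on {-1..0} (stretch2 X)"
    unfolding X stretch2_def prod.case by (intro continuous_on_diff continuous_on_shift_neg1_0 P)
  assume "s \<in> {-1..0}"
  then have "\<bar>P1 (s + 1)\<bar> \<le> st_norm X" "\<bar>P2 s\<bar> \<le> st_norm X"
    unfolding X by (auto intro: st_norm_ge(5,6)[OF P])
  then show "\<bar>stretch2 X s\<bar> \<le> 2 * st_norm X" by (simp add: X stretch2_def)
qed

lemma Jfun_eq_stretch: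
  assumes "continuous_on UNIV dV1" "continuous_on UNIV dV2" "X \<in> Asp"
  shows "Jfun dV1 dV2 w c X = c^2 * Jw w X
    - integral {-1..0} (\<lambda>s. dV1 (stretch1 X s)) - integral {-1..0} (\<lambda>s. dV2 (stretch2 X s))"
proof -
  have "(\<lambda>s. dV1 (stretch1 X s)) integrable_on {-1..0}" "(\<lambda>s. dV2 (stretch2 X s)) integrable_on {-1..0}"
    by (intro integrable_continuous_interval continuous_on_compose2[OF assms(1) stretch1.continuous]
          continuous_on_compose2[OF assms(2) stretch2.continuous] assms(3); simp)+
  then show ?thesis
    by (cases X) (simp add: Jfun_def Jw_def stretch1_def stretch2_def integral_add)
qed

lemma Jw_linear: "Jw w (st_add (st_scale a X) (st_scale b Z)) = a * Jw w X + b * Jw w Z"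
  by (cases X; cases Z) (simp add: Jw_def st_add_def st_scale_def add_divide_distrib algebra_simps)

lemma Jw_add: "Jw w (st_add X Z) = Jw w X + Jw w Z"
  by (cases X; cases Z) (simp add: Jw_def st_add_def add_divide_distrib algebra_simps)

lemma abs_Jw_le:
  assumes "w > 0" "X \<in> Asp"
  shows "\<bar>Jw w X\<bar> \<le> (1 + 1/w) * st_norm X"
proof -
  obtain p1 p2 x1 x2 P1 P2 where X: "X = (p1,p2,x1,x2,P1,P2)"
    and P: "continuous_on {-1..1} P1" "continuous_on {-1..1} P2"
    using assms(2) by (cases X) (auto simp: Asp_def)
  have "\<bar>x1 + x2 / w\<bar> \<le> \<bar>x1\<bar> + \<bar>x2\<bar> / w"
    using assms(1) by (simp add: abs_triangle_ineq[THEN order_trans] abs_divide)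
  also have "\<dots> \<le> st_norm X + st_norm X / w"
    using st_norm_ge(3,4)[OF P] assms(1) unfolding X by (intro add_mono divide_right_mono) auto
  finally show ?thesis by (simp add: X Jw_def algebra_simps)
qed

text \<open>The expansion of (d + t)^2 Jw(U + H) in h = (H, t), a polynomial of degree 3.\<close>
definition speed_form :: "real \<Rightarrow> st \<Rightarrow> real \<Rightarrow> nat \<Rightarrow> (nat \<Rightarrow> ext) \<Rightarrow> real" where
  "speed_form w U d n v =
    (if n = 0 then prod_form (d^2 * Jw w U) 0 (\<lambda>_. snd) v
     else if n = 1 then prod_form (d^2) 1 (\<lambda>_ x. Jw w (fst x)) v + prod_form (2*d*Jw w U) 1 (\<lambda>_. snd) v
     else if n = 2 then prod_form (2*d) 2 (\<lambda>i. if i = 0 then snd else (\<lambda>x. Jw w (fst x))) v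
                        + prod_form (Jw w U) 2 (\<lambda>_. snd) v
     else if n = 3 then prod_form 1 3 (\<lambda>i. if i = 2 then (\<lambda>x. Jw w (fst x)) else snd) v
     else 0)"

definition speed_form_bound :: "real \<Rightarrow> st \<Rightarrow> real \<Rightarrow> nat \<Rightarrow> real" where
  "speed_form_bound w U d n =
    (if n = 0 then \<bar>d^2 * Jw w U\<bar>
     else if n = 1 then (\<bar>d^2\<bar> + \<bar>2*d*Jw w U\<bar>) * (1 + 1/w)
     else if n = 2 then (\<bar>2*d\<bar> + \<bar>Jw w U\<bar>) * (1 + 1/w)^2
     else if n = 3 then (1 + 1/w)^3
     else 0)"

lemma multilin_rel_prod_form_Jw_snd:
  assumes "w > 0" and \<phi>: "\<And>i. \<phi> i = snd \<or> \<phi> i = (\<lambda>x. Jw w (fst x))"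
  shows "multilin_rel (Xsp \<times> UNIV) m (prod_form k m \<phi>) (\<bar>k\<bar> * (1 + 1/w)^m)"
proof (rule multilin_rel_prod_form)
  let ?L = "1 + 1/w"
  show L: "0 \<le> ?L" using assms by simp
  show "\<phi> i (ext_add (ext_scale a x) (ext_scale b y)) = a * \<phi> i x + b * \<phi> i y" for i a b x y
    using \<phi>[of i] by (auto simp: fst_ext_add_scale snd_ext_add_scale Jw_linear)
  show "\<bar>\<phi> i x\<bar> \<le> ?L * ext_norm x" if "x \<in> Xsp \<times> UNIV" for i x
  proof -
    have "\<bar>Jw w (fst x)\<bar> \<le> ?L * ext_norm x"
      using abs_Jw_le[OF \<open>w > 0\<close> Asp_if_Xsp, of "fst x"] that
        mult_left_mono[OF ext_norm_ge(1)[of x] L] by auto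
    moreover have "\<bar>snd x\<bar> \<le> ?L * ext_norm x"
      using ext_norm_ge(2)[of x] mult_right_mono[of 1 ?L "ext_norm x"] ext_norm_ge(3)[of x] \<open>w > 0\<close>
      by simp
    ultimately show ?thesis using \<phi>[of i] by auto
  qed
qed

lemma multilin_rel_speed_form:
  assumes "w > 0"
  shows "multilin_rel (Xsp \<times> UNIV) n (speed_form w U d n) (speed_form_bound w U d n)"
proof -
  note prod_form = multilin_rel_prod_form_Jw_snd[OF assms]
  consider "n = 0" | "n = 1" | "n = 2" | "n = 3" | "n \<ge> 4" by linarith
  then show ?thesis
  proof cases
    case 1
    show ?thesis unfolding 1
      by (rule multilin_rel_cong[OF prod_form[where k = "d^2 * Jw w U" and \<phi> = "\<lambda>_. snd"]])
         (simp_all add: speed_form_def speed_form_bound_def)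
  next
    case 2
    show ?thesis unfolding 2
      by (rule multilin_rel_cong[OF multilin_rel_add[OF
            prod_form[where k = "d^2" and \<phi> = "\<lambda>_ x. Jw w (fst x)"]
            prod_form[where k = "2*d*Jw w U" and \<phi> = "\<lambda>_. snd"]]])
         (simp_all add: speed_form_def speed_form_bound_def algebra_simps)
  next
    case 3
    show ?thesis unfolding 3
      by (rule multilin_rel_cong[OF multilin_rel_add[OF
            prod_form[where k = "2*d" and \<phi> = "\<lambda>i. if i = 0 then snd else (\<lambda>x. Jw w (fst x))"]
            prod_form[where k = "Jw w U" and \<phi> = "\<lambda>_. snd"]]])
         (simp_all add: speed_form_def speed_form_bound_def algebra_simps)
  next
    case 4
    show ?thesis unfolding 4
      by (rule multilin_rel_cong[OF
            prod_form[where k = 1 and \<phi> = "\<lambda>i. if i = 2 then (\<lambda>x. Jw w (fst x)) else snd"]])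
         (simp_all add: speed_form_def speed_form_bound_def)
  next
    case 5
    then show ?thesis
      by (intro multilin_rel_cong[OF multilin_rel_zero]) (simp_all add: speed_form_def speed_form_bound_def)
  qed
qed

lemma speed_form_sums:
  "(\<lambda>n. speed_form w U d n (\<lambda>_. h)) sums ((d + snd h)^2 * Jw w (st_add U (fst h)))"
proof -
  have "(\<lambda>n. speed_form w U d n (\<lambda>_. h)) sums (\<Sum>n\<in>{0,1,2,3}. speed_form w U d n (\<lambda>_. h))"
    by (rule sums_finite) (auto simp: speed_form_def)
  also have "(\<Sum>n\<in>{0,1,2,3}. speed_form w U d n (\<lambda>_. h)) = (d + snd h)^2 * Jw w (st_add U (fst h))"
    by (simp add: speed_form_def prod_form_def Jw_add lessThan_nat_numeral power2_eq_square algebra_simps)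
  finally show ?thesis .
qed

lemma summable_speed_form_bound: "summable (\<lambda>n. speed_form_bound w U d n * r^n)"
  by (rule summable_finite[of "{0,1,2,3}"]) (auto simp: speed_form_bound_def)

definition J_form :: "(real \<Rightarrow> real) \<Rightarrow> (real \<Rightarrow> real) \<Rightarrow> real \<Rightarrow> st \<Rightarrow> real \<Rightarrow> nat \<Rightarrow> (nat \<Rightarrow> ext) \<Rightarrow> real"
  where "J_form dV1 dV2 w U d n v =
    speed_form w U d n v - taylor_form dV1 stretch1 U n v - taylor_form dV2 stretch2 U n v"

lemma summable_geometric_bound:
  fixes B :: real
  assumes "\<rho> > 0" "0 \<le> r" "r \<le> \<rho> / 4"
  shows "summable (\<lambda>n. B * (2/\<rho>)^n * r^n)"
proof -
  have "summable (\<lambda>n. B * (2 * r / \<rho>)^n)"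
    by (intro summable_mult summable_geometric) (use assms in \<open>auto simp: field_simps\<close>)
  then show ?thesis by (simp add: power_mult_distrib power_divide mult.assoc)
qed

lemma J_power_series_at:
  assumes dV1: "real_analytic dV1" and dV2: "real_analytic dV2" and "w > 0" and U: "U \<in> Asp"
  obtains r C where "r > 0" "\<And>n. multilin_rel (Xsp \<times> UNIV) n (J_form dV1 dV2 w U d n) (C n)"
    "summable (\<lambda>n. C n * r^n)"
    "\<And>h. h \<in> Xsp \<times> UNIV \<Longrightarrow> ext_norm h < r \<Longrightarrow>
      (\<lambda>n. J_form dV1 dV2 w U d n (\<lambda>_. h)) sums Jfun dV1 dV2 w (d + snd h) (st_add U (fst h))"
proof -
  obtain \<rho>1 B1 where \<rho>1: "\<rho>1 > 0" and bound1: "\<And>s \<xi> n. s \<in> {-1..0} \<Longrightarrow> \<bar>\<xi> - stretch1 U s\<bar> \<le> \<rho>1 \<Longrightarrow>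
      \<bar>(deriv ^^ n) dV1 \<xi>\<bar> / fact n * \<rho>1^n \<le> B1"
    by (rule stretch1.Cauchy_bound[OF dV1 U]) blast
  obtain \<rho>2 B2 where \<rho>2: "\<rho>2 > 0" and bound2: "\<And>s \<xi> n. s \<in> {-1..0} \<Longrightarrow> \<bar>\<xi> - stretch2 U s\<bar> \<le> \<rho>2 \<Longrightarrow>
      \<bar>(deriv ^^ n) dV2 \<xi>\<bar> / fact n * \<rho>2^n \<le> B2"
    by (rule stretch2.Cauchy_bound[OF dV2 U]) blast
  define r where "r = min \<rho>1 \<rho>2 / 4"
  have r: "r > 0" "r \<le> \<rho>1 / 4" "r \<le> \<rho>2 / 4" using \<rho>1 \<rho>2 by (auto simp: r_def)
  define C where "C n = speed_form_bound w U d n + B1 * (2/\<rho>1)^n + B2 * (2/\<rho>2)^n" for n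
  show thesis
  proof (rule that[OF \<open>r > 0\<close>])
    show "multilin_rel (Xsp \<times> UNIV) n (J_form dV1 dV2 w U d n) (C n)" for n
      unfolding J_form_def C_def
      by (intro multilin_rel_diff multilin_rel_speed_form \<open>w > 0\<close>
          stretch1.multilin_rel_taylor_form[OF dV1 U \<rho>1] stretch2.multilin_rel_taylor_form[OF dV2 U \<rho>2]
          bound1 bound2) (use \<rho>1 \<rho>2 in auto)
    show "summable (\<lambda>n. C n * r^n)"
      unfolding C_def distrib_right
      by (intro summable_add summable_speed_form_bound summable_geometric_bound \<rho>1 \<rho>2 r) (use r in auto)
    show "(\<lambda>n. J_form dV1 dV2 w U d n (\<lambda>_. h)) sums Jfun dV1 dV2 w (d + snd h) (st_add U (fst h))"
      if h: "h \<in> Xsp \<times> UNIV" "ext_norm h < r" for h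
    proof -
      have H: "fst h \<in> Asp" "st_norm (fst h) < r" using h ext_norm_ge(1)[of h] Asp_if_Xsp by auto
      show ?thesis
        unfolding J_form_def Jfun_eq_stretch[OF real_analytic_continuous_on[OF dV1]
            real_analytic_continuous_on[OF dV2] st_add_in_Asp[OF U H(1)]]
        by (intro sums_diff speed_form_sums stretch1.taylor_form_sums[OF dV1 U \<rho>1 bound1]
            stretch2.taylor_form_sums[OF dV2 U \<rho>2 bound2] H(1)) (use H(2) r in auto)
    qed
  qed
qed

lemma analytic_rel_Jfun:
  assumes "real_analytic dV1" "real_analytic dV2" "w > 0"
  shows "analytic_rel (Xsp \<times> UNIV) (\<lambda>(U, d). Jfun dV1 dV2 w d U) (Xsp \<times> UNIV)"
  unfolding analytic_rel_def
proof
  fix x :: ext assume "x \<in> Xsp \<times> UNIV"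
  then obtain U d where x: "x = (U, d)" and U: "U \<in> Asp" by (cases x) (auto intro: Asp_if_Xsp)
  obtain r C where "r > 0" "\<And>n. multilin_rel (Xsp \<times> UNIV) n (J_form dV1 dV2 w U d n) (C n)"
    "summable (\<lambda>n. C n * r^n)"
    and sums: "\<And>h. h \<in> Xsp \<times> UNIV \<Longrightarrow> ext_norm h < r \<Longrightarrow>
      (\<lambda>n. J_form dV1 dV2 w U d n (\<lambda>_. h)) sums Jfun dV1 dV2 w (d + snd h) (st_add U (fst h))"
    by (rule J_power_series_at[OF assms U, where d = d]) blast
  moreover have "(\<lambda>n. J_form dV1 dV2 w U d n (\<lambda>_. h)) sums (\<lambda>(U, d). Jfun dV1 dV2 w d U) (ext_add x h)"
    if "h \<in> Xsp \<times> UNIV" "ext_norm h < r" for h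
    using sums[OF that] by (simp add: x ext_add_def)
  ultimately show "\<exists>r>0. \<exists>M C. (\<forall>n. multilin_rel (Xsp \<times> UNIV) n (M n) (C n)) \<and>
      summable (\<lambda>n. C n * r ^ n) \<and>
      (\<forall>h\<in>Xsp \<times> UNIV. ext_norm h < r \<longrightarrow> (\<lambda>n. M n (\<lambda>_. h)) sums (\<lambda>(U, d). Jfun dV1 dV2 w d U) (ext_add x h))"
    by blast
qed

section \<open>The Frechet derivative of J\<close>

text \<open>Elements of the ambient space need not satisfy P_k(0) = p_k; resetting p_k to P_k(0) maps
  them into X without changing J, which does not depend on p_k.\<close>
definition proj_X :: "st \<Rightarrow> st" where
  "proj_X H = (case H of (p1,p2,x1,x2,P1,P2) \<Rightarrow> (P1 0, P2 0, x1, x2, P1, P2))"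

lemma proj_X_in_Xsp: "H \<in> Asp \<Longrightarrow> proj_X H \<in> Xsp"
  by (cases H) (auto simp: proj_X_def Asp_def Xsp_def)

lemma proj_X_linear:
  "proj_X (st_add (st_scale a u) (st_scale b v)) = st_add (st_scale a (proj_X u)) (st_scale b (proj_X v))"
  by (cases u; cases v) (simp add: proj_X_def st_add_def st_scale_def)

lemma st_norm_proj_X_le:
  assumes "H \<in> Asp"
  shows "st_norm (proj_X H) \<le> st_norm H"
proof -
  obtain p1 p2 x1 x2 P1 P2 where H: "H = (p1,p2,x1,x2,P1,P2)"
    and P: "continuous_on {-1..1} P1" "continuous_on {-1..1} P2"
    using assms by (cases H) (auto simp: Asp_def)
  show ?thesis
    unfolding H proj_X_def prod.case
    by (rule st_norm_le) (use st_norm_ge[OF P] in auto)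
qed

lemma Jfun_add_proj_X: "Jfun dV1 dV2 w d (st_add U (proj_X h)) = Jfun dV1 dV2 w d (st_add U h)"
  by (cases U; cases h) (simp add: Jfun_def proj_X_def st_add_def)

lemma frechet_rel_of_quadratic_remainder:
  assumes linear: "\<forall>u\<in>A. \<forall>v\<in>A. \<forall>a b. L (st_add (st_scale a u) (st_scale b v)) = a * L u + b * L v"
    and bounded: "\<And>h. h \<in> A \<Longrightarrow> \<bar>L h\<bar> \<le> K * st_norm h"
    and "r > 0"
    and remainder: "\<And>h. h \<in> A \<Longrightarrow> st_norm h < r \<Longrightarrow> \<bar>f (st_add x h) - f x - L h\<bar> \<le> T * st_norm h ^ 2"
  shows "frechet_rel A f x L"
  unfolding frechet_rel_def
proof (intro conjI allI impI)
  show "\<exists>K. \<forall>h\<in>A. \<bar>L h\<bar> \<le> K * st_norm h" using bounded by blast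
  fix e :: real assume "e > 0"
  define \<delta> where "\<delta> = min r (e / (\<bar>T\<bar> + 1))"
  have \<delta>: "\<delta> > 0" "\<delta> \<le> r" "\<bar>T\<bar> * \<delta> \<le> e"
    using \<open>r > 0\<close> \<open>e > 0\<close> by (auto simp: \<delta>_def min_def field_simps)
  have "\<bar>f (st_add x h) - f x - L h\<bar> \<le> e * st_norm h" if "h \<in> A" "st_norm h < \<delta>" for h
  proof -
    have "\<bar>f (st_add x h) - f x - L h\<bar> \<le> T * st_norm h ^ 2"
      using remainder[OF that(1)] that(2) \<delta>(2) by simp
    also have "\<dots> \<le> \<bar>T\<bar> * st_norm h * st_norm h"
      by (simp add: power2_eq_square mult.assoc mult_right_mono)
    also have "\<dots> \<le> \<bar>T\<bar> * \<delta> * st_norm h"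
      using that(2) st_norm_nonneg[of h] by (intro mult_right_mono mult_left_mono) auto
    also have "\<dots> \<le> e * st_norm h"
      using \<delta>(3) st_norm_nonneg[of h] by (intro mult_right_mono) auto
    finally show ?thesis .
  qed
  with \<delta>(1) show "\<exists>d>0. \<forall>h\<in>A. st_norm h < d \<longrightarrow> \<bar>f (st_add x h) - f x - L h\<bar> \<le> e * st_norm h"
    by blast
qed (use linear in blast)

lemma power_series_remainder_le:
  assumes "r > 0" and M: "\<And>n. multilin_rel Y n (M n) (C n)" and "summable (\<lambda>n. C n * r^n)"
  obtains T where "T \<ge> 0" "\<And>h g. h \<in> Y \<Longrightarrow> ext_norm h < r \<Longrightarrow> (\<lambda>n. M n (\<lambda>_. h)) sums g \<Longrightarrow>
      \<bar>g - M 0 (\<lambda>_. h) - M 1 (\<lambda>_. h)\<bar> \<le> T * ext_norm h ^ 2"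
proof -
  have C: "C n \<ge> 0" for n using multilin_relD(3)[OF M] .
  have "summable (\<lambda>n. C (n + 2) * r^(n + 2))"
    using \<open>summable _\<close> summable_iff_shift[of "\<lambda>n. C n * r^n" 2] by simp
  moreover have "(\<lambda>n. C (n + 2) * r^(n + 2)) = (\<lambda>n. r^2 * (C (n + 2) * r^n))"
    by (simp add: power_add power2_eq_square algebra_simps)
  ultimately have sC: "summable (\<lambda>n. C (n + 2) * r^n)"
    using \<open>r > 0\<close> summable_cmult_iff[of "r^2"] by simp
  define T where "T = (\<Sum>n. C (n + 2) * r^n)"
  have "T \<ge> 0" unfolding T_def using C \<open>r > 0\<close> by (intro suminf_nonneg sC) auto
  moreover have "\<bar>g - M 0 (\<lambda>_. h) - M 1 (\<lambda>_. h)\<bar> \<le> T * ext_norm h ^ 2"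
    if h: "h \<in> Y" "ext_norm h < r" and "(\<lambda>n. M n (\<lambda>_. h)) sums g" for h g
  proof -
    let ?x = "ext_norm h"
    have tail: "(\<lambda>n. M (n + 2) (\<lambda>_. h)) sums (g - M 0 (\<lambda>_. h) - M 1 (\<lambda>_. h))"
      using sums_split_initial_segment[OF \<open>_ sums g\<close>, of 2] by (simp add: numeral_2_eq_2 algebra_simps)
    have bound: "\<bar>M (n + 2) (\<lambda>_. h)\<bar> \<le> ?x^2 * (C (n + 2) * r^n)" for n
    proof -
      have "\<bar>M (n + 2) (\<lambda>_. h)\<bar> \<le> C (n + 2) * (?x^2 * ?x^n)"
        using multilin_relD(4)[OF M, of "n + 2" "\<lambda>_. h"] h(1)
        by (simp add: power_add power2_eq_square algebra_simps)
      also have "\<dots> \<le> C (n + 2) * (?x^2 * r^n)"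
        using h(2) ext_norm_ge(3)[of h] C by (intro mult_left_mono power_mono) auto
      finally show ?thesis by (simp add: algebra_simps)
    qed
    have "\<bar>g - M 0 (\<lambda>_. h) - M 1 (\<lambda>_. h)\<bar> = \<bar>\<Sum>n. M (n + 2) (\<lambda>_. h)\<bar>"
      using tail by (simp add: sums_iff)
    also have "\<dots> \<le> (\<Sum>n. ?x^2 * (C (n + 2) * r^n))"
      using norm_suminf_le[of "\<lambda>n. M (n + 2) (\<lambda>_. h)" "\<lambda>n. ?x^2 * (C (n + 2) * r^n)"]
        bound summable_mult[OF sC] by simp
    also have "\<dots> = T * ?x^2"
      unfolding T_def using suminf_mult[OF sC] by (simp add: mult.commute)
    finally show ?thesis .
  qed
  ultimately show thesis by (rule that)
qed

lemma frechet_rel_of_power_series: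
  assumes "r > 0" and M: "\<And>n. multilin_rel (Xsp \<times> UNIV) n (M n) (C n)"
    and sC: "summable (\<lambda>n. C n * r^n)"
    and sums: "\<And>H. H \<in> Xsp \<Longrightarrow> st_norm H < r \<Longrightarrow> (\<lambda>n. M n (\<lambda>_. (H, 0))) sums f (st_add U H)"
    and proj: "\<And>h. f (st_add U (proj_X h)) = f (st_add U h)"
  shows "frechet_rel Asp f U (\<lambda>h. M 1 (\<lambda>_. (proj_X h, 0)))"
proof -
  have in_Y: "(proj_X h, 0) \<in> Xsp \<times> UNIV" if "h \<in> Asp" for h
    using proj_X_in_Xsp[OF that] by auto
  have norm_proj: "ext_norm (proj_X h, 0) = st_norm (proj_X h)" for h
    by (simp add: ext_norm_def st_norm_nonneg)
  have f_U: "f U = M 0 v" for v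
    by (rule multilin_rel_const_zero_vector[OF M, of "(st_zero, 0)"])
       (use sums[OF st_zero_in_Xsp] \<open>r > 0\<close> st_zero_in_Xsp in
        \<open>auto simp: ext_norm_def st_norm_zero st_add_zero\<close>)
  obtain T where "T \<ge> 0" and remainder: "\<And>h g. h \<in> Xsp \<times> UNIV \<Longrightarrow> ext_norm h < r \<Longrightarrow>
      (\<lambda>n. M n (\<lambda>_. h)) sums g \<Longrightarrow> \<bar>g - M 0 (\<lambda>_. h) - M 1 (\<lambda>_. h)\<bar> \<le> T * ext_norm h ^ 2"
    by (rule power_series_remainder_le[OF \<open>r > 0\<close> M sC]) blast
  show ?thesis
  proof (rule frechet_rel_of_quadratic_remainder[OF _ _ \<open>r > 0\<close>])
    have "(proj_X (st_add (st_scale a u) (st_scale b v)), 0)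
        = ext_add (ext_scale a (proj_X u, 0)) (ext_scale b (proj_X v, 0))" for a b u v
      by (simp add: ext_add_def ext_scale_def proj_X_linear)
    then show "\<forall>u\<in>Asp. \<forall>v\<in>Asp. \<forall>a b. M 1 (\<lambda>_. (proj_X (st_add (st_scale a u) (st_scale b v)), 0))
        = a * M 1 (\<lambda>_. (proj_X u, 0)) + b * M 1 (\<lambda>_. (proj_X v, 0))"
      using multilin_rel_1_linear[OF M in_Y in_Y] by simp
    show "\<bar>M 1 (\<lambda>_. (proj_X h, 0))\<bar> \<le> C 1 * st_norm h" if "h \<in> Asp" for h
      using multilin_relD(4)[OF M, of 1 "\<lambda>_. (proj_X h, 0)"] multilin_relD(3)[OF M, of 1] in_Y[OF that]
        mult_left_mono[OF st_norm_proj_X_le[OF that], of "C 1"]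
      by (simp add: norm_proj)
    show "\<bar>f (st_add U h) - f U - M 1 (\<lambda>_. (proj_X h, 0))\<bar> \<le> T * st_norm h ^ 2"
      if "h \<in> Asp" "st_norm h < r" for h
    proof -
      have small: "st_norm (proj_X h) < r" using st_norm_proj_X_le[OF that(1)] that(2) by simp
      have "\<bar>f (st_add U h) - f U - M 1 (\<lambda>_. (proj_X h, 0))\<bar> \<le> T * st_norm (proj_X h) ^ 2"
        using remainder[OF in_Y[OF that(1)] _ sums[OF proj_X_in_Xsp[OF that(1)] small]] small
        by (simp add: norm_proj proj f_U[of "\<lambda>_. (proj_X h, 0)"])
      also have "\<dots> \<le> T * st_norm h ^ 2"
        using st_norm_proj_X_le[OF that(1)] st_norm_nonneg \<open>T \<ge> 0\<close>
        by (intro mult_left_mono power_mono) auto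
      finally show ?thesis .
    qed
  qed
qed

definition DJ :: "(real \<Rightarrow> real) \<Rightarrow> (real \<Rightarrow> real) \<Rightarrow> real \<Rightarrow> real \<Rightarrow> st \<Rightarrow> st \<Rightarrow> real" where
  "DJ dV1 dV2 w c U H = c^2 * Jw w H
    - integral {-1..0} (\<lambda>s. deriv dV1 (stretch1 U s) * stretch1 H s)
    - integral {-1..0} (\<lambda>s. deriv dV2 (stretch2 U s) * stretch2 H s)"

lemma J_form_1_proj_X: "J_form dV1 dV2 w U c 1 (\<lambda>_. (proj_X H, 0)) = DJ dV1 dV2 w c U H"
proof -
  have "stretch1 (proj_X H) = stretch1 H" "stretch2 (proj_X H) = stretch2 H" "Jw w (proj_X H) = Jw w H"
    by (cases H; simp add: stretch1_def stretch2_def Jw_def proj_X_def)+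
  then show ?thesis
    by (simp add: J_form_def speed_form_def prod_form_def taylor_form_def DJ_def)
qed

lemma frechet_rel_Jfun:
  assumes "real_analytic dV1" "real_analytic dV2" "w > 0" "U \<in> Asp"
  shows "frechet_rel Asp (Jfun dV1 dV2 w c) U (DJ dV1 dV2 w c U)"
proof -
  obtain r C where "r > 0" "\<And>n. multilin_rel (Xsp \<times> UNIV) n (J_form dV1 dV2 w U c n) (C n)"
    "summable (\<lambda>n. C n * r^n)"
    and sums: "\<And>h. h \<in> Xsp \<times> UNIV \<Longrightarrow> ext_norm h < r \<Longrightarrow>
      (\<lambda>n. J_form dV1 dV2 w U c n (\<lambda>_. h)) sums Jfun dV1 dV2 w (c + snd h) (st_add U (fst h))"
    by (rule J_power_series_at[OF assms, where d = c]) blast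
  moreover have "(\<lambda>n. J_form dV1 dV2 w U c n (\<lambda>_. (H, 0))) sums Jfun dV1 dV2 w c (st_add U H)"
    if "H \<in> Xsp" "st_norm H < r" for H
    using sums[of "(H, 0)"] that \<open>r > 0\<close> by (simp add: ext_norm_def st_norm_nonneg)
  ultimately have "frechet_rel Asp (Jfun dV1 dV2 w c) U (\<lambda>h. J_form dV1 dV2 w U c 1 (\<lambda>_. (proj_X h, 0)))"
    by (intro frechet_rel_of_power_series[where r = r and C = C]) (auto simp: Jfun_add_proj_X)
  then show ?thesis unfolding J_form_1_proj_X by (simp add: fun_eq_iff)
qed

lemma C1_deriv_shift:
  assumes "C1_deriv P Q" "s \<in> {-1..0}"
  shows "((\<lambda>s. P (s + 1)) has_real_derivative Q (s + 1)) (at s within {-1..0})"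
proof -
  have "(P has_real_derivative Q (s + 1)) (at (s + 1) within {-1..1})"
    using assms unfolding C1_deriv_def by auto
  then have "(P has_real_derivative Q (s + 1)) (at ((\<lambda>s. s + 1) s) within (\<lambda>s. s + 1) ` {-1..0})"
    by (rule DERIV_subset) auto
  moreover have "((\<lambda>s. s + 1) has_real_derivative 1) (at s within {-1..0})"
    by (auto intro!: derivative_eq_intros)
  ultimately show ?thesis using DERIV_image_chain by (fastforce simp: o_def)
qed

lemma C1_deriv_restrict:
  assumes "C1_deriv P Q" "s \<in> {-1..0}"
  shows "(P has_real_derivative Q s) (at s within {-1..0})"
proof -
  have "(P has_real_derivative Q s) (at s within {-1..1})"
    using assms unfolding C1_deriv_def by auto
  then show ?thesis by (rule DERIV_subset) auto
qed

lemma DJ_Fvf_eq_0: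
  assumes dV1: "\<And>r. (dV1 has_real_derivative deriv dV1 r) (at r)" "continuous_on UNIV (deriv dV1)"
    and dV2: "\<And>r. (dV2 has_real_derivative deriv dV2 r) (at r)" "continuous_on UNIV (deriv dV2)"
    and "w > 0" "c \<noteq> 0"
    and U: "(p1,p2,x1,x2,P1,P2) \<in> Xsp" and Q: "C1_deriv P1 Q1" "C1_deriv P2 Q2"
  shows "DJ dV1 dV2 w c (p1,p2,x1,x2,P1,P2) (Fvf dV1 dV2 w c (p1,p2,x1,x2,P1,P2) Q1 Q2) = 0"
proof -
  have p: "P1 0 = p1" "P2 0 = p2" and cP: "continuous_on {-1..1} P1" "continuous_on {-1..1} P2"
    using U by (auto simp: Xsp_def)
  have cQ: "continuous_on {-1..1} Q1" "continuous_on {-1..1} Q2" using Q by (auto simp: C1_deriv_def)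
  define G where "G s = dV1 (P2 (s + 1) - P1 s) + dV2 (P1 (s + 1) - P2 s)" for s
  define g1 where "g1 s = deriv dV1 (P2 (s + 1) - P1 s) * (Q2 (s + 1) - Q1 s)" for s
  define g2 where "g2 s = deriv dV2 (P1 (s + 1) - P2 s) * (Q1 (s + 1) - Q2 s)" for s
  have "(G has_real_derivative g1 s + g2 s) (at s within {-1..0})" if "s \<in> {-1..0}" for s
    unfolding G_def g1_def g2_def
    by (intro DERIV_add DERIV_chain2[OF dV1(1)] DERIV_chain2[OF dV2(1)] DERIV_diff
        C1_deriv_shift C1_deriv_restrict Q that)
  then have "((\<lambda>s. g1 s + g2 s) has_integral (G 0 - G (-1))) {-1..0}"
    by (intro fundamental_theorem_of_calculus) (auto simp: has_real_derivative_iff_has_vector_derivative)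
  moreover have "g1 integrable_on {-1..0}" "g2 integrable_on {-1..0}"
    unfolding g1_def g2_def
    by (intro integrable_continuous_interval continuous_intros
        continuous_on_compose2[OF dV1(2)] continuous_on_compose2[OF dV2(2)]
        continuous_on_shift_neg1_0 cP cQ; simp)+
  ultimately have "integral {-1..0} g1 + integral {-1..0} g2 = G 0 - G (-1)"
    by (simp add: integral_add[symmetric] integral_unique)
  moreover have "c^2 * Jw w (Fvf dV1 dV2 w c (p1,p2,x1,x2,P1,P2) Q1 Q2) = G 0 - G (-1)"
    using \<open>c \<noteq> 0\<close> \<open>w > 0\<close> by (simp add: Jw_def Fvf_def G_def p field_simps)
  moreover have "DJ dV1 dV2 w c (p1,p2,x1,x2,P1,P2) (Fvf dV1 dV2 w c (p1,p2,x1,x2,P1,P2) Q1 Q2)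
      = c^2 * Jw w (Fvf dV1 dV2 w c (p1,p2,x1,x2,P1,P2) Q1 Q2) - integral {-1..0} g1 - integral {-1..0} g2"
    by (simp add: DJ_def Fvf_def stretch1_def stretch2_def g1_def[abs_def] g2_def[abs_def])
  ultimately show ?thesis by linarith
qed

lemma deriv_0_eq_linear_coeff:
  fixes f W :: "real \<Rightarrow> real"
  assumes "\<And>r. (f has_real_derivative deriv f r) (at r)"
    and f: "\<And>r. f r = a * r + b * r^2 + W r"
    and W: "((\<lambda>r. W r / r^2) \<longlongrightarrow> 0) (at 0)"
  shows "deriv f 0 = a"
proof -
  have nonzero: "\<forall>\<^sub>F r in at (0::real). r \<noteq> 0" by (simp add: eventually_at_filter)
  have "((\<lambda>r. a * r + b * r^2 + W r / r^2 * r^2) \<longlongrightarrow> a * 0 + b * 0^2 + 0 * 0^2) (at 0)"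
    by (intro tendsto_intros W)
  moreover have "\<forall>\<^sub>F r in at 0. a * r + b * r^2 + W r / r^2 * r^2 = f r"
    using nonzero by eventually_elim (simp add: f)
  ultimately have "(f \<longlongrightarrow> 0) (at 0)" using Lim_transform_eventually by fastforce
  moreover have "(f \<longlongrightarrow> f 0) (at 0)"
    using DERIV_isCont[OF assms(1)] by (simp add: isCont_def)
  ultimately have f0: "f 0 = 0" using tendsto_unique[OF at_neq_bot] by blast
  have quotient: "a + b * r + W r / r^2 * r = (f r - f 0) / (r - 0)" if "r \<noteq> 0" for r
    using that by (simp add: f0 f[of r] field_simps power2_eq_square)
  have "((\<lambda>r. a + b * r + W r / r^2 * r) \<longlongrightarrow> a + b * 0 + 0 * 0) (at 0)"
    by (intro tendsto_intros W)
  moreover have "\<forall>\<^sub>F r in at 0. a + b * r + W r / r^2 * r = (f r - f 0) / (r - 0)"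
    using nonzero by (rule eventually_mono) (rule quotient)
  ultimately have "((\<lambda>r. (f r - f 0) / (r - 0)) \<longlongrightarrow> a) (at 0)"
    using Lim_transform_eventually by fastforce
  then have "(f has_real_derivative a) (at 0)" by (simp add: has_field_derivative_iff)
  then show ?thesis by (rule DERIV_imp_deriv)
qed

lemma integral_shift_neg1_0:
  fixes g :: "real \<Rightarrow> real"
  shows "integral {-1..0} (\<lambda>s. g (s + 1)) = integral {0..1} g"
proof -
  have "integral {-1..0} (\<lambda>s. g (s + 1)) = integral {-1..0} (g \<circ> (+) 1)"
    by (simp add: o_def add.commute)
  also have "\<dots> = integral {0..1} g" using integral_shift_Icc_real[of "-1" 0 g 1] by simp
  finally show ?thesis .
qed

lemma DJ_zero:
  assumes "deriv dV1 0 = 1" "deriv dV2 0 = \<kappa>" and U: "(p1,p2,x1,x2,P1,P2) \<in> Xsp"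
  shows "DJ dV1 dV2 w c st_zero (p1,p2,x1,x2,P1,P2) = c^2 * x1 + c^2 / w * x2
    + integral {-1..0} (\<lambda>s. P1 s + \<kappa> * P2 s) - integral {0..1} (\<lambda>s. \<kappa> * P1 s + P2 s)"
proof -
  let ?U = "(p1,p2,x1,x2,P1,P2)"
  have cP: "continuous_on {-1..1} P1" "continuous_on {-1..1} P2" using U by (auto simp: Xsp_def)
  have int: "P1 integrable_on {-1..0}" "P2 integrable_on {-1..0}"
    "P1 integrable_on {0..1}" "P2 integrable_on {0..1}"
    "(\<lambda>s. P1 (s + 1)) integrable_on {-1..0}" "(\<lambda>s. P2 (s + 1)) integrable_on {-1..0}"
    by (intro integrable_continuous_interval continuous_on_shift_neg1_0 cP
        continuous_on_subset[OF cP(1)] continuous_on_subset[OF cP(2)]; simp)+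
  have "integral {-1..0} (\<lambda>s. deriv dV1 (stretch1 st_zero s) * stretch1 ?U s)
      = integral {-1..0} (\<lambda>s. P2 (s + 1)) - integral {-1..0} P1"
    using assms(1) by (simp add: stretch1_def st_zero_def integral_diff int)
  moreover have "integral {-1..0} (\<lambda>s. deriv dV2 (stretch2 st_zero s) * stretch2 ?U s)
      = \<kappa> * (integral {-1..0} (\<lambda>s. P1 (s + 1)) - integral {-1..0} P2)"
    using assms(2) by (simp add: stretch2_def st_zero_def integral_diff int)
  moreover have "integral {-1..0} (\<lambda>s. P1 s + \<kappa> * P2 s) = integral {-1..0} P1 + \<kappa> * integral {-1..0} P2"
    using integral_add[OF int(1) integrable_on_cmult_left[OF int(2)]] by simp
  moreover have "integral {0..1} (\<lambda>s. \<kappa> * P1 s + P2 s) = \<kappa> * integral {0..1} P1 + integral {0..1} P2"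
    using integral_add[OF integrable_on_cmult_left[OF int(3)] int(4)] by simp
  ultimately show ?thesis
    by (simp add: DJ_def Jw_def integral_shift_neg1_0 algebra_simps add_divide_distrib)
qed

lemma frechet_rel_Jfun_Fvf_eq_0:
  assumes dV: "real_analytic dV1" "real_analytic dV2" and "w > 0" "c \<noteq> 0"
    and U: "(p1,p2,x1,x2,P1,P2) \<in> Dsp" and "C1_deriv P1 Q1" "C1_deriv P2 Q2"
  shows "\<exists>L. frechet_rel Asp (Jfun dV1 dV2 w c) (p1,p2,x1,x2,P1,P2) L \<and>
    L (Fvf dV1 dV2 w c (p1,p2,x1,x2,P1,P2) Q1 Q2) = 0"
proof -
  have "(p1,p2,x1,x2,P1,P2) \<in> Xsp" using U by (simp add: Dsp_def)
  then show ?thesis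
    using frechet_rel_Jfun[OF dV \<open>w > 0\<close> Asp_if_Xsp] DJ_Fvf_eq_0[OF
        real_analytic_has_deriv[OF dV(1)] real_analytic_continuous_on_deriv[OF dV(1)]
        real_analytic_has_deriv[OF dV(2)] real_analytic_continuous_on_deriv[OF dV(2)] assms(3-4)]
      assms(6,7) by blast
qed

lemma frechet_rel_Jfun_zero:
  assumes "real_analytic dV1" "real_analytic dV2" "w > 0" "deriv dV1 0 = 1" "deriv dV2 0 = \<kappa>"
  shows "\<exists>L. frechet_rel Asp (Jfun dV1 dV2 w c) st_zero L \<and>
    (\<forall>p1 p2 x1 x2 P1 P2. (p1,p2,x1,x2,P1,P2) \<in> Xsp \<longrightarrow>
       L (p1,p2,x1,x2,P1,P2) = c^2 * x1 + c^2 / w * x2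
         + integral {-1..0} (\<lambda>s. P1 s + \<kappa> * P2 s) - integral {0..1} (\<lambda>s. \<kappa> * P1 s + P2 s))"
  using frechet_rel_Jfun[OF assms(1-3) Asp_if_Xsp[OF st_zero_in_Xsp]] DJ_zero[OF assms(4,5)] by blast

section \<open>Symmetries and invariances of J\<close>

lemma integral_reflect_neg1_0:
  fixes g :: "real \<Rightarrow> real"
  shows "integral {-1..0} (\<lambda>s. g (- s - 1)) = integral {-1..0} g"
proof -
  have "integral {-1..0} (\<lambda>s. g (- s - 1)) = integral {-1..0} (\<lambda>s. g (- (s + 1)))"
    by simp
  also have "\<dots> = integral {0..1} (\<lambda>s. g (- s))" by (rule integral_shift_neg1_0)
  also have "\<dots> = integral {-1..0} g"
    using Henstock_Kurzweil_Integration.integral_reflect_real[of 0 "-1" g] by simp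
  finally show ?thesis .
qed

lemma Jfun_SM: "Jfun dV dV w c (SM U) = Jfun dV dV w c U"
proof -
  obtain p1 p2 x1 x2 P1 P2 where U: "U = (p1,p2,x1,x2,P1,P2)" by (cases U)
  define g where "g s = dV (P2 (s + 1) - P1 s) + dV (P1 (s + 1) - P2 s)" for s
  have "(\<lambda>s. dV (- P2 (- (s + 1)) - - P1 (- s)) + dV (- P1 (- (s + 1)) - - P2 (- s))) = (\<lambda>s. g (- s - 1))"
    by (simp add: g_def fun_eq_iff algebra_simps)
  then show ?thesis
    using integral_reflect_neg1_0[of g] by (simp add: U Jfun_def SM_def g_def[abs_def])
qed

lemma Jfun_SK: "Jfun dV1 dV2 1 c (SK U) = Jfun dV1 dV2 1 c U"
proof -
  obtain p1 p2 x1 x2 P1 P2 where U: "U = (p1,p2,x1,x2,P1,P2)" by (cases U)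
  define g where "g s = dV1 (P2 (s + 1) - P1 s) + dV2 (P1 (s + 1) - P2 s)" for s
  have "(\<lambda>s. dV1 (- P1 (- (s + 1)) - - P2 (- s)) + dV2 (- P2 (- (s + 1)) - - P1 (- s))) = (\<lambda>s. g (- s - 1))"
    by (simp add: g_def fun_eq_iff algebra_simps)
  then show ?thesis
    using integral_reflect_neg1_0[of g] by (simp add: U Jfun_def SK_def g_def[abs_def] add.commute)
qed

lemma Jfun_add_chi0: "Jfun dV1 dV2 w c (st_add U (st_scale \<mu> chi0)) = Jfun dV1 dV2 w c U"
  by (cases U) (simp add: Jfun_def st_add_def st_scale_def chi0_def)

lemma Jfun_diff_speed: "Jfun dV1 dV2 w c U - Jfun dV1 dV2 w c' U = (c^2 - c'^2) * Jw w U"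
  by (cases U) (simp add: Jfun_def Jw_def algebra_simps)

lemma bounded_linear_rel_Jw: "w > 0 \<Longrightarrow> bounded_linear_rel Xsp (Jw w)"
  unfolding bounded_linear_rel_def using Jw_linear abs_Jw_le Asp_if_Xsp by blast

theorem proposition3p10:
  fixes w \<kappa> \<beta> c :: real
    and V1 V2 dV1 dV2 W1 W2 :: "real \<Rightarrow> real"
  assumes "w > 0" and "\<kappa> > 0" and "c \<noteq> 0"
    and "real_analytic V1" and "real_analytic V2"
    and "\<And>r. (V1 has_real_derivative dV1 r) (at r)"
    and "\<And>r. (V2 has_real_derivative dV2 r) (at r)"
    and "\<And>r. dV1 r = r + r^2 + W1 r"
    and "\<And>r. dV2 r = \<kappa> * r + \<beta> * r^2 + W2 r"
    and "((\<lambda>r. W1 r / r^2) \<longlongrightarrow> 0) (at 0)"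
    and "((\<lambda>r. W2 r / r^2) \<longlongrightarrow> 0) (at 0)"
  shows
    \<comment> \<open>(i)\<close>
    "analytic_rel (Xsp \<times> UNIV) (\<lambda>(U, d). Jfun dV1 dV2 w d U) (Xsp \<times> UNIV)
     \<and> (\<forall>p1 p2 x1 x2 P1 P2 Q1 Q2. (p1,p2,x1,x2,P1,P2) \<in> Dsp \<and> C1_deriv P1 Q1 \<and> C1_deriv P2 Q2 \<longrightarrow>
          (\<exists>L. frechet_rel Asp (Jfun dV1 dV2 w c) (p1,p2,x1,x2,P1,P2) L \<and>
               L (Fvf dV1 dV2 w c (p1,p2,x1,x2,P1,P2) Q1 Q2) = 0))
     \<comment> \<open>(ii)\<close>
     \<and> (\<exists>L. frechet_rel Asp (Jfun dV1 dV2 w c) st_zero L \<and>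
          (\<forall>p1 p2 x1 x2 P1 P2. (p1,p2,x1,x2,P1,P2) \<in> Xsp \<longrightarrow>
             L (p1,p2,x1,x2,P1,P2) = c^2 * x1 + c^2 / w * x2
               + integral {-1..0} (\<lambda>s. P1 s + \<kappa> * P2 s)
               - integral {0..1} (\<lambda>s. \<kappa> * P1 s + P2 s)))
     \<comment> \<open>(iii)\<close>
     \<and> (V1 = V2 \<longrightarrow> (\<forall>U\<in>Xsp. Jfun dV1 dV2 w c (SM U) = Jfun dV1 dV2 w c U))
     \<and> (w = 1 \<longrightarrow> (\<forall>U\<in>Xsp. Jfun dV1 dV2 1 c (SK U) = Jfun dV1 dV2 1 c U))
     \<comment> \<open>(iv)\<close>
     \<and> (\<forall>U\<in>Xsp. \<forall>\<mu>::real. Jfun dV1 dV2 w c (st_add U (st_scale \<mu> chi0)) = Jfun dV1 dV2 w c U)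
     \<comment> \<open>(v)\<close>
     \<and> bounded_linear_rel Xsp (Jw w)
     \<and> (\<forall>U\<in>Xsp. \<forall>c'::real. Jfun dV1 dV2 w c U - Jfun dV1 dV2 w c' U = (c^2 - c'^2) * Jw w U)"
proof -
  have dV: "real_analytic dV1" "real_analytic dV2"
    using real_analytic_derivative assms(4-7) by blast+
  have d1: "deriv dV1 0 = 1"
    by (rule deriv_0_eq_linear_coeff[where b = 1 and W = W1])
       (use real_analytic_has_deriv[OF dV(1)] assms(8,10) in auto)
  have d2: "deriv dV2 0 = \<kappa>"
    by (rule deriv_0_eq_linear_coeff[where b = \<beta> and W = W2])
       (use real_analytic_has_deriv[OF dV(2)] assms(9,11) in auto)
  have "V1 = V2 \<Longrightarrow> dV1 = dV2" using assms(6,7) DERIV_unique by blast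
  then show ?thesis
    using analytic_rel_Jfun[OF dV \<open>w > 0\<close>] frechet_rel_Jfun_Fvf_eq_0[OF dV \<open>w > 0\<close> \<open>c \<noteq> 0\<close>]
      frechet_rel_Jfun_zero[OF dV \<open>w > 0\<close> d1 d2, of c] Jfun_SM Jfun_SK Jfun_add_chi0
      bounded_linear_rel_Jw[OF \<open>w > 0\<close>] Jfun_diff_speed
    by auto
qed

end
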